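(* Let $A$ be a Gorenstein local ring of dimension zero with maximal ideal $M$ and exponent $t+1$, and let $v$ generate the socle: $0:M=M^t=vA$. (i) Let $0\subsetneq I_1\subsetneq\cdots\subsetneq I_t=M$ be a strict chain of Gorenstein ideals of length $t$, and let $v=d_t\cdots d_1$ be a factorization of $v$ with $I_i=0:(d_i\cdots d_1)A$ for $1\le i\le t$. Then each $d_i$ lies in $M\setminus M^2$ and $\mathrm{exponent}(A/I_i)=\mathrm{exponent}(A)-i$. In particular $I_1$ is the annihilator of a minimal generator of $M$ and $\mathrm{exponent}(A/I_1)=\mathrm{exponent}(A)-1$. (ii)(a) If $I$ is a Gorenstein ideal of $A$ with $\mathrm{exponent}(A/I)=\mathrm{exponent}(A)-1$, then the principal ideal $0:I$ is generated by an element $y\in M\setminus M^2$. (b) If $A$ is positively graded with its maximal ideal generated by homogeneous elements of degree $1$ and its degree-zero homogeneous elements forming a field, and $y$ is a homogeneous minimal generator of $M$, then $\mathrm{exponent}(A/(0:yA))=\mathrm{exponent}(A)-1$.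
   Context: The exponent of an artinian local ring with maximal ideal $M$ is $\min\{r\in\mathbb N: M^r=0\}$. A Gorenstein ideal of a local ring $A$ is a proper ideal $I$ such that $A/I$ is Gorenstein. *)

theory Defs
  imports "HOL-Algebra.Algebra"
begin

primrec ideal_pow :: "('a, 'b) ring_scheme \<Rightarrow> 'a set \<Rightarrow> nat \<Rightarrow> 'a set" where
  "ideal_pow R I 0 = carrier R"
| "ideal_pow R I (Suc n) = ideal_prod R I (ideal_pow R I n)"

definition ann :: "('a, 'b) ring_scheme \<Rightarrow> 'a set \<Rightarrow> 'a set" where
  "ann R S = {x \<in> carrier R. \<forall>s\<in>S. x \<otimes>\<^bsub>R\<^esub> s = \<zero>\<^bsub>R\<^esub>}"

definition is_local :: "('a, 'b) ring_scheme \<Rightarrow> bool" where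
  "is_local R \<longleftrightarrow> cring R \<and> (\<exists>!M. maximalideal M R)"

definition max_ideal :: "('a, 'b) ring_scheme \<Rightarrow> 'a set" where
  "max_ideal R = (THE M. maximalideal M R)"

text \<open>Artinian local ring = Noetherian local ring of dimension zero
  (equivalently: Noetherian local ring with nilpotent maximal ideal).\<close>
definition artinian_local :: "('a, 'b) ring_scheme \<Rightarrow> bool" where
  "artinian_local R \<longleftrightarrow> is_local R \<and> noetherian_ring R \<and>
     (\<exists>r. ideal_pow R (max_ideal R) r = {\<zero>\<^bsub>R\<^esub>})"

definition exponent :: "('a, 'b) ring_scheme \<Rightarrow> nat" where
  "exponent R = (LEAST r. ideal_pow R (max_ideal R) r = {\<zero>\<^bsub>R\<^esub>})"

text \<open>Gorenstein local ring of dimension zero: artinian local ring whose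
  socle 0:M is a nonzero principal ideal (i.e. one-dimensional over A/M).\<close>
definition gorenstein_artinian :: "('a, 'b) ring_scheme \<Rightarrow> bool" where
  "gorenstein_artinian R \<longleftrightarrow> artinian_local R \<and>
     (\<exists>v\<in>carrier R. v \<noteq> \<zero>\<^bsub>R\<^esub> \<and> ann R (max_ideal R) = PIdl\<^bsub>R\<^esub> v)"

definition gorenstein_ideal :: "('a, 'b) ring_scheme \<Rightarrow> 'a set \<Rightarrow> bool" where
  "gorenstein_ideal R I \<longleftrightarrow> ideal I R \<and> I \<noteq> carrier R \<and> gorenstein_artinian (R Quot I)"

definition graded_by :: "('a, 'b) ring_scheme \<Rightarrow> (nat \<Rightarrow> 'a set) \<Rightarrow> bool" where
  "graded_by R G \<longleftrightarrow>
     (\<forall>n. additive_subgroup (G n) R) \<and>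
     (\<forall>m n. \<forall>x\<in>G m. \<forall>y\<in>G n. x \<otimes>\<^bsub>R\<^esub> y \<in> G (m + n)) \<and>
     (\<forall>a\<in>carrier R. \<exists>!f. (\<forall>n. f n \<in> G n) \<and>
         (\<exists>N. (\<forall>n\<ge>N. f n = \<zero>\<^bsub>R\<^esub>) \<and> a = finsum R f {..<N}))"

end

(* (i) If d_i were a unit, multiplying d_(i-1)...d_1 by it would not change the annihilator,
   against the strictness of the chain; so all d_i lie in M. Then x_i = d_i...d_1 lies in M^i and
   d_t...d_(i+1) lies in M^(t-i) with product v /= 0, which forces exponent(A/ann x_i) = t+1-i,
   and d_i in M^2 would put v in M^(t+1) = 0.

   (ii)(a) In a Gorenstein ring ann(ann J) = J: along a composition series J = J_0 < ... < R
   each step changes the annihilator by at most one simple step (the socle is principal),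
   which gives length(R/ann J) = length(J). The socle of A/I is generated by some u + I, and an
   element z of ann I with u z /= 0 is annihilated exactly by I, so ann I = zA; the exponent
   condition puts z in M but not in M^2.

   (ii)(b) A homogeneous minimal generator y has degree one. Multiplying y by generators of
   degree one keeps it nonzero until it reaches the socle M^t, and a homogeneous socle element
   of degree j+1 lies in M^t only if j >= t-1; hence M^(t-1) y /= 0 and exponent(A/ann y) = t. *)

theory Submission
  imports Defs
begin

lemmas ideal_zero_closed = additive_subgroup.zero_closed[OF ideal.axioms(1)]
lemmas ideal_add_closed = additive_subgroup.a_closed[OF ideal.axioms(1)]
lemmas ideal_subset_carrier = additive_subgroup.a_subset[OF ideal.axioms(1)]

lemma (in ring) ideal_minus_closed: "ideal I R \<Longrightarrow> a \<in> I \<Longrightarrow> b \<in> I \<Longrightarrow> a \<ominus> b \<in> I"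
  by (simp add: minus_eq ideal_add_closed additive_subgroup.a_inv_closed[OF ideal.axioms(1)])

lemma ann_antimono: "S \<subseteq> T \<Longrightarrow> ann R T \<subseteq> ann R S"
  unfolding ann_def by blast

context cring
begin

lemma ann_ideal:
  assumes "S \<subseteq> carrier R"
  shows "ideal (ann R S) R"
proof (intro idealI add.subgroupI)
  show "ann R S \<subseteq> carrier R" "ann R S \<noteq> {}"
    using assms by (auto simp: ann_def subset_iff intro!: exI[of _ \<zero>])
  fix a b assume "a \<in> ann R S" "b \<in> ann R S"
  then show "a \<oplus> b \<in> ann R S"
    using assms by (auto simp: ann_def l_distr subset_iff)
next
  fix a assume "a \<in> ann R S"
  then show "\<ominus> a \<in> ann R S"
    using assms by (auto simp: ann_def l_minus subset_iff)
next
  fix a x assume a: "a \<in> ann R S" and x: "x \<in> carrier R"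
  have "x \<otimes> a \<otimes> s = x \<otimes> (a \<otimes> s)" if "s \<in> S" for s
    using a x assms that by (auto simp: ann_def m_assoc)
  then show "x \<otimes> a \<in> ann R S"
    using a x by (auto simp: ann_def)
  then show "a \<otimes> x \<in> ann R S"
    using a x by (simp add: ann_def m_comm)
qed (rule ring_axioms)

lemma ann_zero: "ann R {\<zero>} = carrier R"
  by (auto simp: ann_def)

lemma ann_carrier: "ann R (carrier R) = {\<zero>}"
  by (auto simp: ann_def) (metis one_closed r_one)

lemma subset_ann_ann: "S \<subseteq> carrier R \<Longrightarrow> S \<subseteq> ann R (ann R S)"
  by (auto simp: ann_def m_comm subset_iff)

lemma ann_cgenideal:
  assumes x: "x \<in> carrier R"
  shows "ann R (PIdl x) = {a \<in> carrier R. a \<otimes> x = \<zero>}"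
proof (intro equalityI subsetI)
  fix a assume "a \<in> ann R (PIdl x)"
  then show "a \<in> {a \<in> carrier R. a \<otimes> x = \<zero>}"
    using cgenideal_self[OF x] by (auto simp: ann_def)
next
  fix a assume "a \<in> {a \<in> carrier R. a \<otimes> x = \<zero>}"
  moreover have "a \<otimes> (r \<otimes> x) = r \<otimes> (a \<otimes> x)" if "a \<in> carrier R" "r \<in> carrier R" for r
    using that x by (simp add: m_lcomm)
  ultimately show "a \<in> ann R (PIdl x)"
    by (auto simp: ann_def cgenideal_def)
qed

lemma ann_cgenideal_Units_mult:
  assumes u: "u \<in> Units R" and x: "x \<in> carrier R"
  shows "ann R (PIdl (u \<otimes> x)) = ann R (PIdl x)"
proof -
  have "a \<otimes> (u \<otimes> x) = \<zero> \<longleftrightarrow> a \<otimes> x = \<zero>" if "a \<in> carrier R" for a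
    using Units_l_cancel[OF u, of "a \<otimes> x" \<zero>] that u x Units_closed[OF u]
    by (simp add: m_lcomm[of a u])
  moreover have "u \<otimes> x \<in> carrier R"
    using u x by (blast intro: m_closed Units_closed)
  ultimately show ?thesis
    using ann_cgenideal[OF x] ann_cgenideal[of "u \<otimes> x"] by auto
qed

lemma mem_add_cgenideal:
  "x \<in> carrier R \<Longrightarrow> a \<in> J <+>\<^bsub>R\<^esub> PIdl x \<longleftrightarrow> (\<exists>j\<in>J. \<exists>r\<in>carrier R. a = j \<oplus> r \<otimes> x)"
  unfolding set_add_def' cgenideal_def by blast

lemma add_cgenideal_ideal: "ideal J R \<Longrightarrow> x \<in> carrier R \<Longrightarrow> ideal (J <+>\<^bsub>R\<^esub> PIdl x) R"
  by (simp add: add_ideals cgenideal_ideal)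

lemma add_cgenideal_eq_genideal: "ideal J R \<Longrightarrow> x \<in> carrier R \<Longrightarrow> J <+>\<^bsub>R\<^esub> PIdl x = Idl (J \<union> PIdl x)"
  by (simp add: union_genideal cgenideal_ideal)

lemma add_cgenideal_upper:
  assumes "ideal J R" "x \<in> carrier R"
  shows "J \<subseteq> J <+>\<^bsub>R\<^esub> PIdl x" "x \<in> J <+>\<^bsub>R\<^esub> PIdl x"
proof -
  have "J \<subseteq> carrier R" "PIdl x \<subseteq> carrier R"
    using ideal.Icarr[OF assms(1)] ideal.Icarr[OF cgenideal_ideal[OF assms(2)]] by blast+
  then have "J \<union> PIdl x \<subseteq> J <+>\<^bsub>R\<^esub> PIdl x"
    unfolding add_cgenideal_eq_genideal[OF assms] by (intro genideal_self) simp
  then show "J \<subseteq> J <+>\<^bsub>R\<^esub> PIdl x" "x \<in> J <+>\<^bsub>R\<^esub> PIdl x"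
    using cgenideal_self[OF assms(2)] by auto
qed

lemma add_cgenideal_subset:
  assumes "ideal J R" "ideal K R" "J \<subseteq> K" "x \<in> K"
  shows "J <+>\<^bsub>R\<^esub> PIdl x \<subseteq> K"
proof -
  have "J \<union> PIdl x \<subseteq> K"
    using assms(3) cgenideal_minimal[OF assms(2,4)] by (rule Un_least)
  then show ?thesis
    unfolding add_cgenideal_eq_genideal[OF assms(1) ideal.Icarr[OF assms(2,4)]]
    by (rule genideal_minimal[OF assms(2)])
qed

lemma add_cgenideal_absorb:
  assumes "ideal J R" "x \<in> J"
  shows "J <+>\<^bsub>R\<^esub> PIdl x = J"
  using add_cgenideal_subset[OF assms(1,1) subset_refl assms(2)]
    add_cgenideal_upper(1)[OF assms(1) ideal.Icarr[OF assms]] by blast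

lemma ann_add_cgenideal:
  assumes J: "ideal J R" and x: "x \<in> carrier R"
  shows "ann R (J <+>\<^bsub>R\<^esub> PIdl x) = {a \<in> ann R J. a \<otimes> x = \<zero>}"
proof (intro equalityI subsetI)
  fix a assume "a \<in> ann R (J <+>\<^bsub>R\<^esub> PIdl x)"
  then show "a \<in> {a \<in> ann R J. a \<otimes> x = \<zero>}"
    using ann_antimono[OF add_cgenideal_upper(1)[OF J x]] add_cgenideal_upper(2)[OF J x]
    by (auto simp: ann_def)
next
  fix a assume a: "a \<in> {a \<in> ann R J. a \<otimes> x = \<zero>}"
  then have ac: "a \<in> carrier R"
    by (simp add: ann_def)
  have "a \<otimes> (j \<oplus> r \<otimes> x) = \<zero>" if "j \<in> J" "r \<in> carrier R" for j r
  proof -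
    have "a \<otimes> (j \<oplus> r \<otimes> x) = a \<otimes> j \<oplus> r \<otimes> (a \<otimes> x)"
      using ac that x ideal.Icarr[OF J] by (simp add: r_distr m_lcomm)
    then show ?thesis
      using a that by (simp add: ann_def)
  qed
  then show "a \<in> ann R (J <+>\<^bsub>R\<^esub> PIdl x)"
    using ac by (auto simp: ann_def mem_add_cgenideal[OF x])
qed

lemma ideal_pow_ideal: "ideal I R \<Longrightarrow> ideal (ideal_pow R I n) R"
  by (induct n) (simp_all add: oneideal ideal_prod_is_ideal)

lemma ideal_pow_one: "ideal I R \<Longrightarrow> ideal_pow R I 1 = I"
  by (simp add: ideal_prod_one)

lemma ideal_pow_add:
  assumes I: "ideal I R"
  shows "ideal_pow R I (a + b) = ideal_prod R (ideal_pow R I a) (ideal_pow R I b)"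
proof (induct a)
  case 0
  show ?case
    using ideal_prod_commute[OF oneideal ideal_pow_ideal[OF I]] ideal_prod_one[OF ideal_pow_ideal[OF I]]
    by simp
next
  case (Suc a)
  then show ?case
    by (simp add: ideal_prod_assoc[OF I ideal_pow_ideal[OF I] ideal_pow_ideal[OF I]])
qed

lemma ideal_pow_mult_mem:
  "ideal I R \<Longrightarrow> x \<in> ideal_pow R I a \<Longrightarrow> y \<in> ideal_pow R I b \<Longrightarrow> x \<otimes> y \<in> ideal_pow R I (a + b)"
  by (simp add: ideal_pow_add ideal_prod.prod)

lemma ideal_pow_antimono:
  assumes "ideal I R" "a \<le> b"
  shows "ideal_pow R I b \<subseteq> ideal_pow R I a"
proof -
  have "ideal_pow R I (Suc n) \<subseteq> ideal_pow R I n" for n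
    using ideal_prod_inter[OF assms(1) ideal_pow_ideal[OF assms(1)]] by simp
  then show ?thesis
    using lift_Suc_antimono_le[of "ideal_pow R I"] assms(2) by blast
qed

lemma finprod_in_ideal_pow:
  assumes I: "ideal I R"
  shows "finite F \<Longrightarrow> f \<in> F \<rightarrow> I \<Longrightarrow> finprod R f F \<in> ideal_pow R I (card F)"
proof (induct F rule: finite_induct)
  case (insert j F)
  have "f \<in> F \<rightarrow> carrier R" "f j \<in> carrier R"
    using insert.prems ideal.Icarr[OF I] by auto
  then show ?case
    using insert ideal_prod.prod[of "f j" I] by (simp add: finprod_insert Pi_def)
qed simp

end

inductive_set (in ring) ideal_combinations :: "'a set \<Rightarrow> 'a set" for S where
  zero: "\<zero> \<in> ideal_combinations S"
| step: "r \<in> carrier R \<Longrightarrow> s \<in> S \<Longrightarrow> b \<in> ideal_combinations S \<Longrightarrow> r \<otimes> s \<oplus> b \<in> ideal_combinations S"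

context cring
begin

lemma ideal_combinations_carrier: "a \<in> ideal_combinations S \<Longrightarrow> S \<subseteq> carrier R \<Longrightarrow> a \<in> carrier R"
  by (induct rule: ideal_combinations.induct) auto

lemma ideal_ideal_combinations:
  assumes S: "S \<subseteq> carrier R"
  shows "ideal (ideal_combinations S) R"
proof -
  note carr = ideal_combinations_carrier[OF _ S]
  have add: "a \<oplus> b \<in> ideal_combinations S"
    if "a \<in> ideal_combinations S" "b \<in> ideal_combinations S" for a b
    using that
  proof (induct rule: ideal_combinations.induct)
    case (step r s a)
    then have "r \<otimes> s \<oplus> a \<oplus> b = r \<otimes> s \<oplus> (a \<oplus> b)"
      using S carr by (auto intro!: a_assoc)
    then show ?case
      using ideal_combinations.step step by simp
  qed (use carr in simp)
  have neg: "\<ominus> a \<in> ideal_combinations S" if "a \<in> ideal_combinations S" for a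
    using that
  proof (induct rule: ideal_combinations.induct)
    case (step r s a)
    then have "\<ominus> (r \<otimes> s \<oplus> a) = (\<ominus> r) \<otimes> s \<oplus> \<ominus> a"
      using S carr by (auto simp: minus_add l_minus)
    then show ?case
      using ideal_combinations.step step by simp
  qed (simp add: ideal_combinations.zero)
  have mult: "x \<otimes> a \<in> ideal_combinations S" if "a \<in> ideal_combinations S" "x \<in> carrier R" for a x
    using that
  proof (induct rule: ideal_combinations.induct)
    case (step r s a)
    then have "x \<otimes> (r \<otimes> s \<oplus> a) = (x \<otimes> r) \<otimes> s \<oplus> x \<otimes> a"
      using S carr by (auto simp: r_distr m_assoc)
    then show ?case
      using ideal_combinations.step step by simp
  qed (simp add: ideal_combinations.zero)
  show ?thesis
  proof (intro idealI add.subgroupI)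
    show "ideal_combinations S \<subseteq> carrier R" "ideal_combinations S \<noteq> {}"
      using carr ideal_combinations.zero by blast+
    fix a x assume "a \<in> ideal_combinations S" "x \<in> carrier R"
    then show "x \<otimes> a \<in> ideal_combinations S" "a \<otimes> x \<in> ideal_combinations S"
      using mult carr m_comm by auto
  qed (use add neg ring_axioms in auto)
qed

lemma genideal_induct [consumes 2, case_names zero step]:
  assumes "a \<in> Idl S" "S \<subseteq> carrier R"
    and "P \<zero>"
    and "\<And>r s b. r \<in> carrier R \<Longrightarrow> s \<in> S \<Longrightarrow> b \<in> carrier R \<Longrightarrow> P b \<Longrightarrow> P (r \<otimes> s \<oplus> b)"
  shows "P a"
proof -
  have "S \<subseteq> ideal_combinations S"
  proof
    fix s assume "s \<in> S"
    then have "\<one> \<otimes> s \<oplus> \<zero> \<in> ideal_combinations S"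
      by (intro ideal_combinations.intros) auto
    then show "s \<in> ideal_combinations S"
      using \<open>s \<in> S\<close> assms(2) by auto
  qed
  then have "a \<in> ideal_combinations S"
    using genideal_minimal[OF ideal_ideal_combinations[OF assms(2)]] assms(1) by blast
  then show ?thesis
    by (induct rule: ideal_combinations.induct)
      (use assms(2-4) ideal_combinations_carrier in auto)
qed

end

section \<open>Quotient rings\<close>

context ring
begin

lemma carrier_Quot: "ideal I R \<Longrightarrow> carrier (R Quot I) = (+>) I ` carrier R"
  by (auto simp: FactRing_def A_RCOSETS_def')

lemma rcos_eq_iff:
  assumes "ideal I R" "a \<in> carrier R" "b \<in> carrier R"
  shows "I +> a = I +> b \<longleftrightarrow> a \<ominus> b \<in> I"
proof -
  interpret abelian_subgroup I R
    using assms(1) abelian_subgroupI3 ideal.axioms(1) is_abelian_group by blast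
  show ?thesis
  proof
    assume "I +> a = I +> b"
    then have "a \<in> I +> b"
      using a_rcos_self[OF assms(2)] by simp
    then show "a \<ominus> b \<in> I"
      using a_rcos_module_minus[OF ring_axioms assms(3,2)] by simp
  next
    assume "a \<ominus> b \<in> I"
    then have "a \<in> I +> b"
      using a_rcos_module_minus[OF ring_axioms assms(3,2)] by simp
    then show "I +> a = I +> b"
      using a_repr_independence'[OF _ assms(3)] by simp
  qed
qed

lemma rcos_eq_zero_iff:
  assumes "ideal I R" "a \<in> carrier R"
  shows "I +> a = I \<longleftrightarrow> a \<in> I"
  using rcos_eq_iff[OF assms zero_closed] a_rcos_zero[OF assms(1) ideal_zero_closed[OF assms(1)]] assms(2)
  by (simp add: minus_eq)

lemma image_rcos_eq_zero_iff:
  assumes I: "ideal I R" and N: "ideal N R"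
  shows "(+>) I ` N = {I} \<longleftrightarrow> N \<subseteq> I"
proof -
  have "I +> n = I \<longleftrightarrow> n \<in> I" if "n \<in> N" for n
    using rcos_eq_zero_iff[OF I ideal.Icarr[OF N that]] .
  moreover have "I +> \<zero> = I"
    using rcos_eq_zero_iff[OF I] ideal_zero_closed[OF I] by simp
  ultimately show ?thesis
    using ideal_zero_closed[OF N] by (auto simp: image_iff)
qed

lemma zero_Quot: "\<zero>\<^bsub>R Quot I\<^esub> = I"
  by (simp add: FactRing_def)

lemma image_rcos_Union:
  assumes I: "ideal I R" and J: "ideal J (R Quot I)"
  shows "(+>) I ` \<Union>J = J"
proof -
  have "J \<in> (\<lambda>K. (+>) I ` K) ` {K. ideal K R \<and> I \<subseteq> K}"
    using bij_betw_imp_surj_on[OF quot_ideal_correspondence[OF I]] J by simp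
  then obtain K where K: "ideal K R" "I \<subseteq> K" "J = (+>) I ` K"
    by auto
  then have "\<Union>J = K"
    using ideal_incl_iff[OF I K(1)] by simp
  then show ?thesis
    using K(3) by simp
qed

lemma ideal_prod_Quot:
  assumes I: "ideal I R" and N: "ideal N R" and N': "ideal N' R"
  shows "ideal_prod (R Quot I) ((+>) I ` N) ((+>) I ` N') = (+>) I ` ideal_prod R N N'"
proof (intro equalityI subsetI)
  note hom = ideal.rcos_ring_hom[OF I]
  fix U assume "U \<in> ideal_prod (R Quot I) ((+>) I ` N) ((+>) I ` N')"
  then show "U \<in> (+>) I ` ideal_prod R N N'"
  proof (induct U rule: ideal_prod.induct)
    case (prod U V)
    then obtain a b where ab: "a \<in> N" "b \<in> N'" "U = I +> a" "V = I +> b"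
      by blast
    then have "U \<otimes>\<^bsub>R Quot I\<^esub> V = I +> (a \<otimes> b)"
      using ring_hom_mult[OF hom] ideal.Icarr[OF N] ideal.Icarr[OF N'] by simp
    then show ?case
      using ideal_prod.prod[OF ab(1,2)] by blast
  next
    case (sum U V)
    then obtain a b where ab: "a \<in> ideal_prod R N N'" "b \<in> ideal_prod R N N'" "U = I +> a" "V = I +> b"
      by blast
    then have "U \<oplus>\<^bsub>R Quot I\<^esub> V = I +> (a \<oplus> b)"
      using ring_hom_add[OF hom] ideal_prod_in_carrier[OF N N'] by auto
    then show ?case
      using ideal_prod.sum[OF ab(1,2)] by blast
  qed
next
  note hom = ideal.rcos_ring_hom[OF I]
  fix U assume "U \<in> (+>) I ` ideal_prod R N N'"
  then obtain s where s: "s \<in> ideal_prod R N N'" "U = I +> s"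
    by blast
  have "I +> s \<in> ideal_prod (R Quot I) ((+>) I ` N) ((+>) I ` N')"
    using s(1)
  proof (induct s rule: ideal_prod.induct)
    case (prod a b)
    then have "I +> (a \<otimes> b) = (I +> a) \<otimes>\<^bsub>R Quot I\<^esub> (I +> b)"
      using ring_hom_mult[OF hom] ideal.Icarr[OF N] ideal.Icarr[OF N'] by simp
    then show ?case
      using prod ideal_prod.prod[of "I +> a" "(+>) I ` N" "I +> b" "(+>) I ` N'" "R Quot I"] by simp
  next
    case (sum a b)
    then have "I +> (a \<oplus> b) = (I +> a) \<oplus>\<^bsub>R Quot I\<^esub> (I +> b)"
      using ring_hom_add[OF hom] ideal_prod_in_carrier[OF N N'] by auto
    then show ?case
      using sum ideal_prod.sum[of "I +> a" "R Quot I" "(+>) I ` N" "(+>) I ` N'" "I +> b"] by simp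
  qed
  then show "U \<in> ideal_prod (R Quot I) ((+>) I ` N) ((+>) I ` N')"
    using s(2) by simp
qed

lemma rcos_mem_ann_Quot:
  assumes I: "ideal I R" and N: "N \<subseteq> carrier R" and a: "a \<in> carrier R"
  shows "I +> a \<in> ann (R Quot I) ((+>) I ` N) \<longleftrightarrow> (\<forall>n\<in>N. a \<otimes> n \<in> I)"
proof -
  have "(I +> a) \<otimes>\<^bsub>R Quot I\<^esub> (I +> n) = \<zero>\<^bsub>R Quot I\<^esub> \<longleftrightarrow> a \<otimes> n \<in> I" if "n \<in> N" for n
    using ring_hom_mult[OF ideal.rcos_ring_hom[OF I] a, of n] that N a
      rcos_eq_zero_iff[OF I, of "a \<otimes> n"]
    by (auto simp: FactRing_def)
  moreover have "I +> a \<in> carrier (R Quot I)"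
    using carrier_Quot[OF I] a by simp
  ultimately show ?thesis
    unfolding ann_def by blast
qed

end

context cring
begin

lemma ideal_pow_Quot:
  assumes I: "ideal I R" and N: "ideal N R"
  shows "ideal_pow (R Quot I) ((+>) I ` N) n = (+>) I ` ideal_pow R N n"
proof (induct n)
  case 0
  then show ?case
    using carrier_Quot[OF I] by simp
next
  case (Suc n)
  then show ?case
    using ideal_prod_Quot[OF I N ideal_pow_ideal[OF N]] by simp
qed

lemma rcos_mem_cgenideal_Quot:
  assumes I: "ideal I R" and a: "a \<in> carrier R" and u: "u \<in> carrier R"
  shows "I +> a \<in> cgenideal (R Quot I) (I +> u) \<longleftrightarrow> a \<in> I <+>\<^bsub>R\<^esub> PIdl u"
proof -
  have "I +> a \<in> cgenideal (R Quot I) (I +> u) \<longleftrightarrow> (\<exists>r\<in>carrier R. I +> a = I +> (r \<otimes> u))"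
    using ring_hom_mult[OF ideal.rcos_ring_hom[OF I] _ u] carrier_Quot[OF I]
    unfolding cgenideal_def by auto
  also have "\<dots> \<longleftrightarrow> (\<exists>r\<in>carrier R. a \<ominus> r \<otimes> u \<in> I)"
    using rcos_eq_iff[OF I a] u by simp
  also have "\<dots> \<longleftrightarrow> a \<in> I <+>\<^bsub>R\<^esub> PIdl u"
  proof -
    have "a \<ominus> r \<otimes> u = j \<longleftrightarrow> a = j \<oplus> r \<otimes> u" if "r \<in> carrier R" "j \<in> carrier R" for r j
      using that a u by (auto simp: minus_eq a_assoc l_neg r_neg)
    then show ?thesis
      unfolding mem_add_cgenideal[OF u] using ideal.Icarr[OF I] m_closed[OF _ u] minus_closed a
      by (metis ideal.Icarr[OF I])
  qed
  finally show ?thesis .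
qed

end

context ring
begin

lemma exists_maximalideal_superset:
  assumes I: "ideal I R" "I \<noteq> carrier R"
  shows "\<exists>M. maximalideal M R \<and> I \<subseteq> M"
proof -
  define Proper where "Proper = {J. ideal J R \<and> I \<subseteq> J \<and> \<one> \<notin> J}"
  have one_notin_I: "\<one> \<notin> I"
    using ideal.one_imp_carrier[OF I(1)] I(2) by blast
  have "\<exists>M\<in>Proper. \<forall>J\<in>Proper. M \<subseteq> J \<longrightarrow> J = M"
  proof (rule subset_Zorn)
    fix C assume C: "subset.chain Proper C"
    show "\<exists>U\<in>Proper. \<forall>J\<in>C. J \<subseteq> U"
    proof (cases "C = {}")
      case True
      then show ?thesis
        using I(1) one_notin_I unfolding Proper_def by blast
    next
      case False
      have "subset.chain {J. ideal J R} C"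
        using C unfolding pred_on.chain_def Proper_def by blast
      then have "ideal (\<Union>C) R"
        using chain_Union_is_ideal[of C] False by simp
      moreover have "I \<subseteq> \<Union>C" "\<one> \<notin> \<Union>C"
        using C False unfolding pred_on.chain_def Proper_def by blast+
      ultimately show ?thesis
        unfolding Proper_def by blast
    qed
  qed
  then obtain M where M: "M \<in> Proper" "\<And>J. J \<in> Proper \<Longrightarrow> M \<subseteq> J \<Longrightarrow> J = M"
    by blast
  have "maximalideal M R"
  proof (rule maximalidealI)
    show "ideal M R" "carrier R \<noteq> M"
      using M(1) unfolding Proper_def by auto
    fix J assume J: "ideal J R" "M \<subseteq> J" "J \<subseteq> carrier R"
    show "J = M \<or> J = carrier R"
    proof (cases "\<one> \<in> J")
      case True
      then show ?thesis
        using ideal.one_imp_carrier[OF J(1)] by blast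
    next
      case False
      then have "J \<in> Proper"
        using J M(1) unfolding Proper_def by blast
      then show ?thesis
        using M(2) J(2) by blast
    qed
  qed
  then show ?thesis
    using M(1) unfolding Proper_def by blast
qed

end

lemma (in noetherian_ring) wf_ideal_psuperset: "wf {(K, J). ideal J R \<and> ideal K R \<and> J \<subset> K}"
proof (rule ccontr)
  assume "\<not> ?thesis"
  then obtain f where "\<forall>i. (f (Suc i), f i) \<in> {(K, J). ideal J R \<and> ideal K R \<and> J \<subset> K}"
    unfolding wf_iff_no_infinite_down_chain by blast
  then have f: "\<And>i. ideal (f i) R" "\<And>i. f i \<subset> f (Suc i)"
    by auto
  have le: "f i \<subseteq> f j" if "i \<le> j" for i j
  proof -
    have "f n \<subseteq> f (Suc n)" for n
      using f(2)[of n] by blast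
    then show ?thesis
      using lift_Suc_mono_le[of f] that by blast
  qed
  have "f i \<subseteq> f j \<or> f j \<subseteq> f i" for i j
    using le nat_le_linear by blast
  then have "subset.chain {I. ideal I R} (range f)"
    unfolding pred_on.chain_def using f(1) by blast
  then have "\<Union>(range f) \<in> range f"
    by (intro ideal_chain_is_trivial) auto
  then obtain n where "\<Union>(range f) = f n"
    by blast
  then show False
    using f(2)[of n] by blast
qed

section \<open>Local rings\<close>

locale local_ring = cring R for R (structure) +
  fixes M
  assumes maximalideal_M: "maximalideal M R"
    and maximalideal_unique: "maximalideal N R \<Longrightarrow> N = M"
begin

lemma ideal_M: "ideal M R"
  using maximalideal_M by (rule maximalideal.axioms(1))

lemma M_subset_carrier: "M \<subseteq> carrier R"
  using ideal.Icarr[OF ideal_M] by blast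

lemma proper_ideal_subset_M: "ideal I R \<Longrightarrow> I \<noteq> carrier R \<Longrightarrow> I \<subseteq> M"
  using exists_maximalideal_superset maximalideal_unique by blast

lemma notin_M_Units:
  assumes a: "a \<in> carrier R" "a \<notin> M"
  shows "a \<in> Units R"
proof (rule ccontr)
  assume "a \<notin> Units R"
  then have "PIdl a \<subseteq> M"
    using proper_ideal_subset_M[OF cgenideal_ideal[OF a(1)]] ideal_eq_carrier_iff[OF a(1)] by blast
  then show False
    using cgenideal_self[OF a(1)] a(2) by blast
qed

lemma maximalideal_Quot:
  assumes I: "ideal I R" "I \<noteq> carrier R"
  shows "maximalideal ((+>) I ` M) (R Quot I)"
proof -
  have Union_M: "\<Union>((+>) I ` M) = M"
    using ideal_incl_iff[OF I(1) ideal_M] proper_ideal_subset_M[OF I] by simp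
  have ideal_M_Quot: "ideal ((+>) I ` M) (R Quot I)"
    using ring_ideal_imp_quot_ideal[OF I(1) ideal_M] .
  have proper: "carrier (R Quot I) \<noteq> (+>) I ` M"
  proof
    assume "carrier (R Quot I) = (+>) I ` M"
    then have "\<Union>((+>) I ` carrier R) = M"
      using Union_M carrier_Quot[OF I(1)] by simp
    moreover have "\<Union>((+>) I ` carrier R) = carrier R"
      using ideal_incl_iff[OF I(1) oneideal] ideal.Icarr[OF I(1)] by blast
    ultimately show False
      using maximalideal.I_notcarr[OF maximalideal_M] by simp
  qed
  show ?thesis
  proof (rule maximalidealI[OF ideal_M_Quot proper])
    fix J assume J: "ideal J (R Quot I)" "(+>) I ` M \<subseteq> J" "J \<subseteq> carrier (R Quot I)"
    note J_eq = image_rcos_Union[OF I(1) J(1)]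
    have "M = \<Union>((+>) I ` M)"
      using Union_M by simp
    also have "\<dots> \<subseteq> \<Union>J"
      using J(2) by (rule Union_mono)
    finally have "\<Union>J = M \<or> \<Union>J = carrier R"
      using maximalideal.I_maximal[OF maximalideal_M quot_ideal_imp_ring_ideal[OF I(1) J(1)]]
        canonical_proj_vimage_in_carrier[OF I(1) J(3)] by blast
    then show "J = (+>) I ` M \<or> J = carrier (R Quot I)"
    proof
      assume "\<Union>J = M"
      then show ?thesis
        using J_eq by simp
    next
      assume "\<Union>J = carrier R"
      then show ?thesis
        using J_eq carrier_Quot[OF I(1)] by simp
    qed
  qed
qed

lemma max_ideal_Quot:
  assumes I: "ideal I R" "I \<noteq> carrier R"
  shows "max_ideal (R Quot I) = (+>) I ` M"
proof -
  note max = maximalideal_Quot[OF I]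
  have ideal_M_Quot: "ideal ((+>) I ` M) (R Quot I)"
    using max by (rule maximalideal.axioms(1))
  have proper: "carrier (R Quot I) \<noteq> (+>) I ` M"
    using maximalideal.I_notcarr[OF max] .
  have M_Quot_carrier: "(+>) I ` M \<subseteq> carrier (R Quot I)"
    using carrier_Quot[OF I(1)] M_subset_carrier by auto
  have unique: "N = (+>) I ` M" if N: "maximalideal N (R Quot I)" for N
  proof -
    have N_ideal: "ideal N (R Quot I)"
      using N by (rule maximalideal.axioms(1))
    note N_eq = image_rcos_Union[OF I(1) N_ideal]
    have "\<Union>N \<noteq> carrier R"
    proof
      assume "\<Union>N = carrier R"
      then have "N = carrier (R Quot I)"
        using N_eq carrier_Quot[OF I(1)] by simp
      then show False
        using maximalideal.I_notcarr[OF N] by simp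
    qed
    then have "\<Union>N \<subseteq> M"
      using proper_ideal_subset_M[OF quot_ideal_imp_ring_ideal[OF I(1) N_ideal]] by blast
    then have "(+>) I ` \<Union>N \<subseteq> (+>) I ` M"
      by (rule image_mono)
    then have "N \<subseteq> (+>) I ` M"
      using N_eq by simp
    then have "(+>) I ` M = N \<or> (+>) I ` M = carrier (R Quot I)"
      using maximalideal.I_maximal[OF N ideal_M_Quot _ M_Quot_carrier] by blast
    then show ?thesis
      using proper by auto
  qed
  show ?thesis
    unfolding max_ideal_def using max unique by (rule the_equality)
qed

lemma exponent_Quot_le_iff:
  assumes nil: "ideal_pow R M n = {\<zero>}" and I: "ideal I R" "I \<noteq> carrier R"
  shows "exponent (R Quot I) \<le> r \<longleftrightarrow> ideal_pow R M r \<subseteq> I"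
proof -
  have "ideal_pow (R Quot I) (max_ideal (R Quot I)) k = {\<zero>\<^bsub>R Quot I\<^esub>} \<longleftrightarrow> ideal_pow R M k \<subseteq> I" for k
    unfolding max_ideal_Quot[OF I] ideal_pow_Quot[OF I(1) ideal_M] zero_Quot
    by (rule image_rcos_eq_zero_iff[OF I(1) ideal_pow_ideal[OF ideal_M]])
  then have exp: "exponent (R Quot I) = (LEAST k. ideal_pow R M k \<subseteq> I)"
    unfolding exponent_def by simp
  have "ideal_pow R M n \<subseteq> I"
    using nil ideal_zero_closed[OF I(1)] by simp
  then have pow_exp: "ideal_pow R M (exponent (R Quot I)) \<subseteq> I"
    unfolding exp by (rule LeastI)
  show ?thesis
  proof
    assume "exponent (R Quot I) \<le> r"
    then show "ideal_pow R M r \<subseteq> I"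
      using ideal_pow_antimono[OF ideal_M] pow_exp by blast
  next
    assume "ideal_pow R M r \<subseteq> I"
    then show "exponent (R Quot I) \<le> r"
      unfolding exp by (rule Least_le)
  qed
qed

lemma exponent_Quot_ann:
  assumes nil: "ideal_pow R M (Suc t) = {\<zero>}" and "i \<le> t"
    and x: "x \<in> ideal_pow R M i" and y: "y \<in> ideal_pow R M (t - i)" and yx: "y \<otimes> x \<noteq> \<zero>"
  shows "exponent (R Quot ann R (PIdl x)) = Suc t - i"
proof -
  have xc: "x \<in> carrier R"
    using ideal.Icarr[OF ideal_pow_ideal[OF ideal_M] x] .
  have ann_x: "ann R (PIdl x) = {a \<in> carrier R. a \<otimes> x = \<zero>}"
    using ann_cgenideal[OF xc] .
  have I: "ideal (ann R (PIdl x)) R"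
    using ann_ideal ideal.Icarr[OF cgenideal_ideal[OF xc]] by blast
  have "x \<noteq> \<zero>"
    using yx ideal.Icarr[OF ideal_pow_ideal[OF ideal_M] y] by auto
  then have "\<one> \<notin> ann R (PIdl x)"
    using ann_x xc by simp
  then have proper: "ann R (PIdl x) \<noteq> carrier R"
    by blast
  have "ideal_pow R M (Suc t - i) \<subseteq> ann R (PIdl x)"
  proof
    fix a assume a: "a \<in> ideal_pow R M (Suc t - i)"
    have "a \<otimes> x \<in> ideal_pow R M (Suc t - i + i)"
      using ideal_pow_mult_mem[OF ideal_M a x] .
    then have "a \<otimes> x = \<zero>"
      using nil \<open>i \<le> t\<close> by simp
    then show "a \<in> ann R (PIdl x)"
      using ann_x ideal.Icarr[OF ideal_pow_ideal[OF ideal_M] a] by blast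
  qed
  moreover have "\<not> ideal_pow R M (t - i) \<subseteq> ann R (PIdl x)"
    using y yx ann_x by blast
  ultimately show ?thesis
    using exponent_Quot_le_iff[OF nil I proper] \<open>i \<le> t\<close>
    by (metis Suc_diff_le le_antisym not_less_eq_eq)
qed

lemma factor_in_M_if_ann_changes:
  assumes "x \<in> carrier R" "d \<in> carrier R" "ann R (PIdl (d \<otimes> x)) \<noteq> ann R (PIdl x)"
  shows "d \<in> M"
proof (rule ccontr)
  assume "d \<notin> M"
  then have "d \<in> Units R"
    using notin_M_Units assms(2) by blast
  then show False
    using ann_cgenideal_Units_mult assms(1,3) by blast
qed

lemma annihilator_chain_exponent:
  assumes nil: "ideal_pow R M (Suc t) = {\<zero>}"
    and d: "d \<in> {1..t} \<rightarrow> M" and v: "finprod R d {1..t} \<noteq> \<zero>" and i: "i \<in> {1..t}"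
  shows "d i \<notin> ideal_pow R M 2"
    and "exponent (R Quot ann R (PIdl (finprod R d {1..i}))) = Suc t - i"
proof -
  have dc: "d \<in> {1..t} \<rightarrow> carrier R"
    using d ideal.Icarr[OF ideal_M] by blast
  show "d i \<notin> ideal_pow R M 2"
  proof
    assume d2: "d i \<in> ideal_pow R M 2"
    have "finprod R d {1..t} = d i \<otimes> finprod R d ({1..t} - {i})"
      using finprod_insert[of "{1..t} - {i}" i d] dc i insert_Diff[OF i] by (simp add: Pi_def)
    also have "\<dots> \<in> ideal_pow R M (2 + card ({1..t} - {i}))"
    proof -
      have "finprod R d ({1..t} - {i}) \<in> ideal_pow R M (card ({1..t} - {i}))"
        using finprod_in_ideal_pow[OF ideal_M, of "{1..t} - {i}" d] d by blast
      then show ?thesis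
        by (rule ideal_pow_mult_mem[OF ideal_M d2])
    qed
    also have "2 + card ({1..t} - {i}) = Suc t"
      using i by simp
    finally show False
      using nil v by simp
  qed
  have dM_i: "d \<in> {1..i} \<rightarrow> M" "d \<in> {Suc i..t} \<rightarrow> M"
    using d i by auto
  then have dc_i: "d \<in> {1..i} \<rightarrow> carrier R" "d \<in> {Suc i..t} \<rightarrow> carrier R"
    using M_subset_carrier by auto
  have "{1..t} = {1..i} \<union> {Suc i..t}"
    using i by auto
  then have "finprod R d {1..t} = finprod R d {1..i} \<otimes> finprod R d {Suc i..t}"
    using finprod_Un_disjoint[of "{1..i}" "{Suc i..t}" d, OF _ _ _ dc_i] by simp
  moreover have "finprod R d {1..i} \<otimes> finprod R d {Suc i..t} = finprod R d {Suc i..t} \<otimes> finprod R d {1..i}"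
    using m_comm[OF finprod_closed[OF dc_i(1)] finprod_closed[OF dc_i(2)]] .
  ultimately have "finprod R d {Suc i..t} \<otimes> finprod R d {1..i} \<noteq> \<zero>"
    using v by metis
  moreover have "finprod R d {1..i} \<in> ideal_pow R M i"
    using finprod_in_ideal_pow[OF ideal_M _ dM_i(1)] i by simp
  moreover have "finprod R d {Suc i..t} \<in> ideal_pow R M (t - i)"
    using finprod_in_ideal_pow[OF ideal_M _ dM_i(2)] by simp
  ultimately show "exponent (R Quot ann R (PIdl (finprod R d {1..i}))) = Suc t - i"
    using exponent_Quot_ann[OF nil] i by simp
qed

lemma mult_ann_in_socle:
  assumes x: "x \<in> carrier R" "\<forall>m\<in>M. x \<otimes> m \<in> J" and a: "a \<in> ann R J"
  shows "a \<otimes> x \<in> ann R M"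
proof -
  have "a \<otimes> x \<otimes> m = a \<otimes> (x \<otimes> m)" if "m \<in> M" for m
    using a x(1) that M_subset_carrier by (auto simp: ann_def m_assoc)
  then show ?thesis
    using a x by (auto simp: ann_def)
qed

(* The socle of R/I is generated by the class of u. *)
lemma gorenstein_ideal_colon:
  assumes G: "gorenstein_ideal R I"
  obtains u where "u \<in> carrier R" "u \<notin> I"
    "{a \<in> carrier R. \<forall>m\<in>M. a \<otimes> m \<in> I} = I <+>\<^bsub>R\<^esub> PIdl u"
proof -
  have I: "ideal I R" "I \<noteq> carrier R" and Q: "gorenstein_artinian (R Quot I)"
    using G unfolding gorenstein_ideal_def by auto
  obtain w where w: "w \<in> carrier (R Quot I)" "w \<noteq> I"
    "ann (R Quot I) ((+>) I ` M) = cgenideal (R Quot I) w"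
    using Q unfolding gorenstein_artinian_def max_ideal_Quot[OF I] zero_Quot by blast
  then obtain u where u: "u \<in> carrier R" "w = I +> u"
    using carrier_Quot[OF I(1)] by auto
  have "a \<in> carrier R \<and> (\<forall>m\<in>M. a \<otimes> m \<in> I) \<longleftrightarrow> a \<in> I <+>\<^bsub>R\<^esub> PIdl u" for a
  proof (cases "a \<in> carrier R")
    case True
    then show ?thesis
      using rcos_mem_ann_Quot[OF I(1) M_subset_carrier True]
        rcos_mem_cgenideal_Quot[OF I(1) True u(1)] w(3) u(2) by auto
  next
    case False
    then show ?thesis
      using ideal.Icarr[OF add_cgenideal_ideal[OF I(1) u(1)]] by blast
  qed
  moreover have "u \<notin> I"
    using w(2) u rcos_eq_zero_iff[OF I(1)] by simp
  ultimately show ?thesis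
    using that u(1) by blast
qed

lemma annihilator_chain_factors:
  assumes nil: "ideal_pow R M (Suc t) = {\<zero>}"
    and bottom: "{\<zero>} \<subset> I 1" and chain: "\<forall>i. 1 \<le> i \<and> i < t \<longrightarrow> I i \<subset> I (Suc i)"
    and d: "\<forall>i\<in>{1..t}. d i \<in> carrier R" and v: "finprod R d {1..t} \<noteq> \<zero>"
    and I: "\<forall>i\<in>{1..t}. I i = ann R (PIdl (finprod R d {1..i}))"
  shows "\<forall>i\<in>{1..t}. d i \<in> M - ideal_pow R M 2 \<and> exponent (R Quot I i) = Suc t - i"
proof -
  have dM: "d i \<in> M" if i: "i \<in> {1..t}" for i
  proof (rule factor_in_M_if_ann_changes)
    have d_i: "d \<in> {1..i - 1} \<rightarrow> carrier R"
      using d i by auto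
    then show x: "finprod R d {1..i - 1} \<in> carrier R"
      by (rule finprod_closed)
    show "d i \<in> carrier R"
      using d i by blast
    have "{1..i} = insert i {1..i - 1}"
      using i by auto
    moreover have "finprod R d (insert i {1..i - 1}) = d i \<otimes> finprod R d {1..i - 1}"
      by (rule finprod_insert) (use d_i d i in auto)
    ultimately have "finprod R d {1..i} = d i \<otimes> finprod R d {1..i - 1}"
      by simp
    moreover have "ann R (PIdl (finprod R d {1..i - 1})) \<noteq> I i"
    proof (cases "i = 1")
      case True
      have "PIdl \<one> = carrier R"
        using ideal_eq_carrier_iff[OF one_closed] by simp
      then show ?thesis
        using True ann_carrier bottom by auto
    next
      case False
      then have "1 \<le> i - 1 \<and> i - 1 < t"
        using i by auto
      then have "I (i - 1) \<subset> I (Suc (i - 1))"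
        using chain by blast
      moreover have "i - 1 \<in> {1..t}"
        using \<open>1 \<le> i - 1 \<and> i - 1 < t\<close> by simp
      then have "I (i - 1) = ann R (PIdl (finprod R d {1..i - 1}))"
        using I by blast
      ultimately show ?thesis
        using i False by auto
    qed
    ultimately show "ann R (PIdl (d i \<otimes> finprod R d {1..i - 1})) \<noteq> ann R (PIdl (finprod R d {1..i - 1}))"
      using I i by simp
  qed
  show ?thesis
    using annihilator_chain_exponent[OF nil _ v] dM I by auto
qed

(* One step of a composition series: K/J is isomorphic to the residue field. *)
definition elementary_ext :: "'a set \<Rightarrow> 'a set \<Rightarrow> bool" where
  "elementary_ext J K \<longleftrightarrow> ideal J R \<and>
     (\<exists>x\<in>carrier R. x \<notin> J \<and> (\<forall>m\<in>M. x \<otimes> m \<in> J) \<and> K = J <+>\<^bsub>R\<^esub> PIdl x)"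

lemma elementary_ext_ideal:
  assumes "elementary_ext J K"
  shows "ideal J R" "ideal K R"
  using assms add_cgenideal_ideal unfolding elementary_ext_def by auto

lemma elementary_ext_psubset: "elementary_ext J K \<Longrightarrow> J \<subset> K"
  unfolding elementary_ext_def using add_cgenideal_upper by blast

lemma elementary_ext_intermediate:
  assumes e: "elementary_ext J K" and L: "ideal L R" "J \<subseteq> L" "L \<subseteq> K"
  shows "L = J \<or> L = K"
proof (rule ccontr)
  assume neq: "\<not> (L = J \<or> L = K)"
  obtain x where J: "ideal J R" and x: "x \<in> carrier R" "x \<notin> J" "\<forall>m\<in>M. x \<otimes> m \<in> J"
    and K: "K = J <+>\<^bsub>R\<^esub> PIdl x"
    using e unfolding elementary_ext_def by blast
  obtain y where y: "y \<in> L" "y \<notin> J"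
    using neq L(2) by blast
  then obtain j r where jr: "j \<in> J" "r \<in> carrier R" "y = j \<oplus> r \<otimes> x"
    using L(3) K mem_add_cgenideal[OF x(1)] by blast
  have jc: "j \<in> carrier R"
    using ideal.Icarr[OF J jr(1)] .
  have "r \<notin> M"
  proof
    assume "r \<in> M"
    then have "x \<otimes> r \<in> J"
      using x(3) by blast
    then have "r \<otimes> x \<in> J"
      using m_comm[OF x(1) jr(2)] by simp
    then show False
      using y(2) jr(1,3) ideal_add_closed[OF J] by blast
  qed
  then have r_unit: "r \<in> Units R"
    using notin_M_Units jr(2) by blast
  have "r \<otimes> x = y \<ominus> j"
    using jr jc x(1) by (simp add: minus_eq a_comm[of j] a_assoc r_neg)
  then have "r \<otimes> x \<in> L"
    using ideal_minus_closed[OF L(1) y(1)] jr(1) L(2) by auto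
  then have "inv r \<otimes> (r \<otimes> x) \<in> L"
    using ideal.I_l_closed[OF L(1)] r_unit by blast
  moreover have "inv r \<otimes> (r \<otimes> x) = x"
    using r_unit x(1) by (metis Units_closed Units_inv_closed Units_l_inv l_one m_assoc)
  ultimately have "x \<in> L"
    by simp
  then have "K \<subseteq> L"
    using add_cgenideal_subset[OF J L(1) L(2)] K by simp
  then show False
    using neq L(3) by blast
qed

inductive ext_chain :: "'a set \<Rightarrow> 'a set \<Rightarrow> nat \<Rightarrow> bool" where
  refl: "ext_chain K K 0"
| step: "elementary_ext J J' \<Longrightarrow> ext_chain J' K n \<Longrightarrow> ext_chain J K (Suc n)"

(* The length of the module R/J. *)
definition colength :: "'a set \<Rightarrow> nat" where
  "colength J = (LEAST n. ext_chain J (carrier R) n)"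

lemma colength_le: "ext_chain J (carrier R) n \<Longrightarrow> colength J \<le> n"
  unfolding colength_def by (rule Least_le)

lemma colength_carrier: "colength (carrier R) = 0"
  using colength_le[OF ext_chain.refl] by simp

(* Jordan-Hoelder: adding the generator of each step of a chain from J to an ideal K above J
   gives a chain from K, and some step collapses when K /= J. *)
lemma ext_chain_superset:
  "ext_chain J C n \<Longrightarrow> C = carrier R \<Longrightarrow> ideal K R \<Longrightarrow> J \<subseteq> K \<Longrightarrow>
    \<exists>m. ext_chain K C m \<and> m \<le> n \<and> (K \<noteq> J \<longrightarrow> m < n)"
proof (induction arbitrary: K rule: ext_chain.induct)
  case (refl C)
  then have "K = C"
    using ideal.Icarr[OF refl.prems(2)] by blast
  then show ?case
    using ext_chain.refl by blast
next
  case (step J J' C n)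
  obtain x where J: "ideal J R" and x: "x \<in> carrier R" "x \<notin> J" "\<forall>m\<in>M. x \<otimes> m \<in> J"
    and J': "J' = J <+>\<^bsub>R\<^esub> PIdl x"
    using step.hyps(1) unfolding elementary_ext_def by blast
  define K' where "K' = K <+>\<^bsub>R\<^esub> PIdl x"
  have K'_ideal: "ideal K' R"
    unfolding K'_def by (rule add_cgenideal_ideal[OF step.prems(2) x(1)])
  have K_K': "K \<subseteq> K'" and x_K': "x \<in> K'"
    unfolding K'_def using add_cgenideal_upper[OF step.prems(2) x(1)] by auto
  have "J' \<subseteq> K'"
    unfolding J' using add_cgenideal_subset[OF J K'_ideal _ x_K'] step.prems(3) K_K' by blast
  then obtain m where m: "ext_chain K' C m" "m \<le> n" "K' \<noteq> J' \<longrightarrow> m < n"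
    using step.IH[OF step.prems(1) K'_ideal] by blast
  show ?case
  proof (cases "x \<in> K")
    case True
    then have "K' = K"
      unfolding K'_def by (rule add_cgenideal_absorb[OF step.prems(2)])
    then show ?thesis
      using m by (intro exI[of _ m]) auto
  next
    case False
    have "\<forall>m\<in>M. x \<otimes> m \<in> K"
      using x(3) step.prems(3) by blast
    then have "elementary_ext K K'"
      unfolding elementary_ext_def K'_def using step.prems(2) x(1) False by blast
    then have "ext_chain K C (Suc m)"
      using m(1) by (rule ext_chain.step)
    moreover have "K' \<noteq> J'" if "K \<noteq> J"
    proof
      assume "K' = J'"
      then have "K = J \<or> K = J'"
        using elementary_ext_intermediate[OF step.hyps(1) step.prems(2,3)] K_K' by blast
      then show False
        using that False \<open>K' = J'\<close> x_K' by blast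
    qed
    ultimately show ?thesis
      using m(2,3) by (intro exI[of _ "Suc m"]) auto
  qed
qed

end

section \<open>Artinian local rings\<close>

locale artinian_local_ring = local_ring + noetherian_ring R +
  assumes nilpotent_M: "\<exists>n. ideal_pow R M n = {\<zero>}"
begin

lemma exists_socle_multiple:
  assumes I: "ideal I R" and x: "x \<in> carrier R" "x \<notin> I"
  shows "\<exists>b\<in>carrier R. x \<otimes> b \<notin> I \<and> (\<forall>m\<in>M. x \<otimes> b \<otimes> m \<in> I)"
proof (rule ccontr)
  assume none: "\<not> ?thesis"
  have "\<exists>b\<in>ideal_pow R M k. x \<otimes> b \<notin> I" for k
  proof (induct k)
    case 0
    then show ?case
      using x by (intro bexI[of _ \<one>]) auto
  next
    case (Suc k)
    then obtain b where b: "b \<in> ideal_pow R M k" "x \<otimes> b \<notin> I"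
      by blast
    have bc: "b \<in> carrier R"
      using ideal.Icarr[OF ideal_pow_ideal[OF ideal_M] b(1)] .
    then obtain m where m: "m \<in> M" "x \<otimes> b \<otimes> m \<notin> I"
      using none b(2) by blast
    have "x \<otimes> (m \<otimes> b) = x \<otimes> b \<otimes> m"
      using x(1) bc M_subset_carrier m(1) by (auto simp: m_assoc m_comm[of m b])
    then have "x \<otimes> (m \<otimes> b) \<notin> I"
      using m(2) by simp
    moreover have "m \<otimes> b \<in> ideal_pow R M (Suc k)"
      using m(1) b(1) by (simp add: ideal_prod.prod)
    ultimately show ?case
      by blast
  qed
  moreover obtain n where "ideal_pow R M n = {\<zero>}"
    using nilpotent_M by blast
  ultimately obtain b where "b = \<zero>" "x \<otimes> b \<notin> I"
    by blast
  then show False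
    using x(1) ideal_zero_closed[OF I] by simp
qed

lemma ext_chain_exists:
  assumes K: "ideal K R"
  shows "ideal J R \<Longrightarrow> J \<subseteq> K \<Longrightarrow> \<exists>n. ext_chain J K n"
proof (induct J rule: wf_induct[OF wf_ideal_psuperset])
  case (1 J)
  show ?case
  proof (cases "J = K")
    case True
    then show ?thesis
      using ext_chain.refl by blast
  next
    case False
    then obtain x where x: "x \<in> K" "x \<notin> J"
      using 1(3) by blast
    obtain b where b: "b \<in> carrier R" "x \<otimes> b \<notin> J" "\<forall>m\<in>M. x \<otimes> b \<otimes> m \<in> J"
      using exists_socle_multiple[OF 1(2) ideal.Icarr[OF K x(1)] x(2)] by blast
    have xb: "x \<otimes> b \<in> K"
      using ideal.I_r_closed[OF K x(1) b(1)] .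
    define J' where "J' = J <+>\<^bsub>R\<^esub> PIdl (x \<otimes> b)"
    have e: "elementary_ext J J'"
      unfolding elementary_ext_def J'_def using 1(2) b ideal.Icarr[OF K xb] by blast
    have "J' \<subseteq> K"
      unfolding J'_def using add_cgenideal_subset[OF 1(2) K 1(3) xb] .
    moreover have "ideal J' R" "J \<subset> J'"
      using elementary_ext_ideal(2)[OF e] elementary_ext_psubset[OF e] by auto
    ultimately obtain n where "ext_chain J' K n"
      using 1(1) 1(2) by blast
    then show ?thesis
      using ext_chain.step[OF e] by blast
  qed
qed

lemma colength_ext_chain_carrier:
  assumes J: "ideal J R"
  shows "ext_chain J (carrier R) (colength J)"
proof -
  have "J \<subseteq> carrier R"
    using ideal.Icarr[OF J] by blast
  then obtain n where "ext_chain J (carrier R) n"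
    using ext_chain_exists[OF oneideal J] by blast
  then show ?thesis
    unfolding colength_def by (rule LeastI)
qed

lemma colength_psubset:
  assumes "ideal J R" "ideal K R" "J \<subset> K"
  shows "colength K < colength J"
  using ext_chain_superset[OF colength_ext_chain_carrier[OF assms(1)] HOL.refl assms(2)] assms(3)
    colength_le by fastforce

lemma colength_elementary_ext:
  assumes e: "elementary_ext J K"
  shows "colength J = Suc (colength K)"
proof -
  have "colength J \<le> Suc (colength K)"
    using colength_le ext_chain.step[OF e colength_ext_chain_carrier[OF elementary_ext_ideal(2)[OF e]]] .
  moreover have "colength K < colength J"
    using colength_psubset elementary_ext_ideal[OF e] elementary_ext_psubset[OF e] by blast
  ultimately show ?thesis
    by simp
qed

lemma colength_ext_chain: "ext_chain J K n \<Longrightarrow> colength J = colength K + n"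
  by (induct rule: ext_chain.induct) (simp_all add: colength_elementary_ext)


lemma ann_cgenideal_eq_if_socle_generator_survives:
  assumes I: "ideal I R" and u: "u \<in> carrier R"
    and colon: "{a \<in> carrier R. \<forall>m\<in>M. a \<otimes> m \<in> I} = I <+>\<^bsub>R\<^esub> PIdl u"
    and z: "z \<in> ann R I" "u \<otimes> z \<noteq> \<zero>"
  shows "ann R (PIdl z) = I"
proof -
  have zc: "z \<in> carrier R"
    using z(1) by (simp add: ann_def)
  have zI: "i \<otimes> z = \<zero>" if "i \<in> I" for i
  proof -
    have "z \<otimes> i = \<zero>"
      using z(1) that by (simp add: ann_def)
    then show ?thesis
      using m_comm[OF zc ideal.Icarr[OF I that]] by simp
  qed
  have uM: "u \<otimes> m \<in> I" if "m \<in> M" for m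
    using add_cgenideal_upper(2)[OF I u] colon that by blast
  show ?thesis
  proof (intro equalityI subsetI)
    fix a assume "a \<in> ann R (PIdl z)"
    then have a: "a \<in> carrier R" "a \<otimes> z = \<zero>"
      using ann_cgenideal[OF zc] by auto
    show "a \<in> I"
    proof (rule ccontr)
      assume "a \<notin> I"
      then obtain b where b: "b \<in> carrier R" "a \<otimes> b \<notin> I" "\<forall>m\<in>M. a \<otimes> b \<otimes> m \<in> I"
        using exists_socle_multiple[OF I a(1)] by blast
      then have "a \<otimes> b \<in> I <+>\<^bsub>R\<^esub> PIdl u"
        using colon a(1) by blast
      then obtain j r where jr: "j \<in> I" "r \<in> carrier R" "a \<otimes> b = j \<oplus> r \<otimes> u"
        using mem_add_cgenideal[OF u] by blast
      have "r \<notin> M"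
      proof
        assume "r \<in> M"
        then have "u \<otimes> r \<in> I"
          using uM by blast
        then have "r \<otimes> u \<in> I"
          using m_comm[OF u jr(2)] by simp
        then show False
          using b(2) jr ideal_add_closed[OF I] by simp
      qed
      then have r_unit: "r \<in> Units R"
        using notin_M_Units jr(2) by blast
      have jc: "j \<in> carrier R"
        using ideal.Icarr[OF I jr(1)] .
      have "r \<otimes> (u \<otimes> z) = (j \<oplus> r \<otimes> u) \<otimes> z"
        using jc jr(2) u zc zI[OF jr(1)] by (simp add: l_distr m_assoc)
      also have "\<dots> = b \<otimes> (a \<otimes> z)"
        using a(1) b(1) zc jr(3) by (simp add: m_lcomm m_assoc[symmetric] m_comm[of a b])
      also have "\<dots> = r \<otimes> \<zero>"
        using a b(1) Units_closed[OF r_unit] by simp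
      finally have "r \<otimes> (u \<otimes> z) = r \<otimes> \<zero>" .
      then have "u \<otimes> z = \<zero>"
        using Units_l_cancel[OF r_unit] u zc by simp
      then show False
        using z(2) by simp
    qed
  next
    fix a assume "a \<in> I"
    then show "a \<in> ann R (PIdl z)"
      using zI[of a] ann_cgenideal[OF zc] ideal.Icarr[OF I] by simp
  qed
qed

end

section \<open>Gorenstein local rings\<close>

locale gorenstein_local_ring = artinian_local_ring +
  fixes v
  assumes v_carrier: "v \<in> carrier R" and v_nonzero: "v \<noteq> \<zero>" and socle_eq: "ann R M = PIdl v"
begin

lemma socle_eq_cgenideal:
  assumes s: "s \<in> ann R M" "s \<noteq> \<zero>"
  shows "ann R M = PIdl s"
proof -
  obtain r where r: "r \<in> carrier R" "s = r \<otimes> v"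
    using s(1) socle_eq unfolding cgenideal_def by blast
  have "r \<notin> M"
  proof
    assume "r \<in> M"
    then have "v \<otimes> r = \<zero>"
      using cgenideal_self[OF v_carrier] socle_eq unfolding ann_def by blast
    then show False
      using s(2) r m_comm[OF r(1) v_carrier] by simp
  qed
  then have "r \<in> Units R"
    using notin_M_Units r(1) by blast
  then have "s \<sim> v"
    using associatedI2[of r s v] r m_comm[OF r(1) v_carrier] v_carrier by simp
  then have "PIdl s = PIdl v"
    using associated_iff_same_ideal r v_carrier by simp
  then show ?thesis
    using socle_eq by simp
qed

(* This is where the principal socle is used. *)
lemma ann_subset_ann_add_cgenideal:
  assumes J: "ideal J R" and x: "x \<in> carrier R" "\<forall>m\<in>M. x \<otimes> m \<in> J"
    and z: "z \<in> ann R J" "z \<otimes> x \<noteq> \<zero>"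
  shows "ann R J \<subseteq> ann R (J <+>\<^bsub>R\<^esub> PIdl x) <+>\<^bsub>R\<^esub> PIdl z"
proof
  fix a assume a: "a \<in> ann R J"
  have ann_J: "ideal (ann R J) R"
    using ann_ideal[OF ideal_subset_carrier[OF J]] .
  have ac: "a \<in> carrier R" and zc: "z \<in> carrier R"
    using a z(1) by (simp_all add: ann_def)
  obtain c where c: "c \<in> carrier R" "a \<otimes> x = c \<otimes> (z \<otimes> x)"
    using mult_ann_in_socle[OF x a] socle_eq_cgenideal[OF mult_ann_in_socle[OF x z(1)] z(2)]
    unfolding cgenideal_def by blast
  define b where "b = a \<ominus> c \<otimes> z"
  have "b \<in> ann R J"
    unfolding b_def using ideal_minus_closed[OF ann_J a ideal.I_l_closed[OF ann_J z(1) c(1)]] .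
  moreover have "b \<otimes> x = \<zero>"
    unfolding b_def using ac c zc x(1) by (simp add: minus_eq l_distr l_minus m_assoc r_neg)
  ultimately have "b \<in> ann R (J <+>\<^bsub>R\<^esub> PIdl x)"
    using ann_add_cgenideal[OF J x(1)] by blast
  moreover have "a = b \<oplus> c \<otimes> z"
    unfolding b_def using ac c(1) zc by (simp add: minus_eq a_assoc l_neg)
  ultimately show "a \<in> ann R (J <+>\<^bsub>R\<^esub> PIdl x) <+>\<^bsub>R\<^esub> PIdl z"
    using c(1) mem_add_cgenideal[OF zc] by blast
qed

lemma ann_elementary_ext:
  assumes e: "elementary_ext J J'"
  shows "ann R J' = ann R J \<or> elementary_ext (ann R J') (ann R J)"
proof (cases "ann R J' = ann R J")
  case False
  obtain x where J: "ideal J R" and x: "x \<in> carrier R" "x \<notin> J" "\<forall>m\<in>M. x \<otimes> m \<in> J"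
    and J': "J' = J <+>\<^bsub>R\<^esub> PIdl x"
    using e unfolding elementary_ext_def by blast
  have ann_J: "ideal (ann R J) R" and ann_J': "ideal (ann R J') R"
    using ann_ideal[OF ideal_subset_carrier] elementary_ext_ideal[OF e] by auto
  have ann_J'_eq: "ann R J' = {a \<in> ann R J. a \<otimes> x = \<zero>}"
    unfolding J' using ann_add_cgenideal[OF J x(1)] .
  have sub: "ann R J' \<subseteq> ann R J"
    using ann_antimono[OF elementary_ext_psubset[OF e, THEN psubset_imp_subset]] .
  then obtain z where z: "z \<in> ann R J" "z \<notin> ann R J'"
    using False by blast
  have zc: "z \<in> carrier R"
    using z(1) by (simp add: ann_def)
  have "z \<otimes> x \<noteq> \<zero>"
    using z ann_J'_eq by blast
  then have "ann R J = ann R J' <+>\<^bsub>R\<^esub> PIdl z"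
    using ann_subset_ann_add_cgenideal[OF J x(1,3) z(1)] add_cgenideal_subset[OF ann_J' ann_J sub z(1)]
    unfolding J' by blast
  moreover have "z \<otimes> m \<in> ann R J'" if m: "m \<in> M" for m
  proof -
    have mc: "m \<in> carrier R"
      using m M_subset_carrier by blast
    have "z \<otimes> m \<otimes> x = z \<otimes> x \<otimes> m"
      using zc mc x(1) by (simp add: m_assoc m_comm[of m x])
    also have "\<dots> = \<zero>"
      using mult_ann_in_socle[OF x(1,3) z(1)] m by (simp add: ann_def)
    finally show ?thesis
      using ann_J'_eq ideal.I_r_closed[OF ann_J z(1) mc] by blast
  qed
  ultimately have "elementary_ext (ann R J') (ann R J)"
    unfolding elementary_ext_def using ann_J' zc z(2) by blast
  then show ?thesis
    by blast
qed simp

lemma colength_ann_ext_chain: "ext_chain J K n \<Longrightarrow> colength (ann R K) \<le> colength (ann R J) + n"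
proof (induct rule: ext_chain.induct)
  case (step J J' K n)
  have "colength (ann R J') \<le> Suc (colength (ann R J))"
    using ann_elementary_ext[OF step(1)] colength_elementary_ext by fastforce
  then show ?case
    using step(3) by simp
qed simp

(* Length form of Matlis duality: length (R/ann J) = length J. *)
lemma colength_ann: "ideal J R \<Longrightarrow> colength (ann R J) + colength J = colength {\<zero>}"
proof (rule antisym)
  assume J: "ideal J R"
  obtain n where n: "ext_chain {\<zero>} J n"
    using ext_chain_exists[OF J zeroideal] ideal_zero_closed[OF J] by blast
  have "colength (ann R J) \<le> n"
    using colength_ann_ext_chain[OF n] ann_zero colength_carrier by simp
  then show "colength (ann R J) + colength J \<le> colength {\<zero>}"
    using colength_ext_chain[OF n] by simp
  show "colength {\<zero>} \<le> colength (ann R J) + colength J"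
    using colength_ann_ext_chain[OF colength_ext_chain_carrier[OF J]] ann_carrier by simp
qed

lemma ann_ann:
  assumes J: "ideal J R"
  shows "ann R (ann R J) = J"
proof (rule ccontr)
  assume "ann R (ann R J) \<noteq> J"
  then have "J \<subset> ann R (ann R J)"
    using subset_ann_ann[OF ideal_subset_carrier[OF J]] by blast
  moreover have ann_J: "ideal (ann R J) R"
    using ann_ideal[OF ideal_subset_carrier[OF J]] .
  moreover have "ideal (ann R (ann R J)) R"
    using ann_ideal[OF ideal_subset_carrier[OF ann_J]] .
  ultimately have "colength (ann R (ann R J)) < colength J"
    using colength_psubset J by blast
  then show False
    using colength_ann[OF J] colength_ann[OF ann_J] by simp
qed

lemma ann_gorenstein_ideal_principal:
  assumes G: "gorenstein_ideal R I"
  shows "\<exists>z\<in>carrier R. ann R I = PIdl z"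
proof -
  have I: "ideal I R"
    using G unfolding gorenstein_ideal_def by blast
  obtain u where u: "u \<in> carrier R" "u \<notin> I"
    and colon: "{a \<in> carrier R. \<forall>m\<in>M. a \<otimes> m \<in> I} = I <+>\<^bsub>R\<^esub> PIdl u"
    using gorenstein_ideal_colon[OF G] by blast
  have "u \<notin> ann R (ann R I)"
    using ann_ann[OF I] u(2) by simp
  then obtain z where z: "z \<in> ann R I" "u \<otimes> z \<noteq> \<zero>"
    using u(1) unfolding ann_def by blast
  have zc: "z \<in> carrier R"
    using z(1) by (simp add: ann_def)
  have "ann R (PIdl z) = I"
    using ann_cgenideal_eq_if_socle_generator_survives[OF I u(1) colon z] .
  then have "ann R I = PIdl z"
    using ann_ann[OF cgenideal_ideal[OF zc]] by simp
  then show ?thesis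
    using zc by blast
qed

lemma ann_gorenstein_ideal_minimal_generator:
  assumes nil: "ideal_pow R M (Suc t) = {\<zero>}" and top: "ideal_pow R M t \<noteq> {\<zero>}"
    and G: "gorenstein_ideal R I" and e: "exponent (R Quot I) = t"
  shows "\<exists>y\<in>M - ideal_pow R M 2. ann R I = PIdl y"
proof -
  have I: "ideal I R" "I \<noteq> carrier R"
    using G unfolding gorenstein_ideal_def by auto
  have exp_iff: "t \<le> r \<longleftrightarrow> ideal_pow R M r \<subseteq> I" for r
    using exponent_Quot_le_iff[OF nil I] e by simp
  obtain z where zc: "z \<in> carrier R" and z: "ann R I = PIdl z"
    using ann_gorenstein_ideal_principal[OF G] by blast
  have ann_z: "ann R (PIdl z) = I"
    using ann_ann[OF I(1)] z by simp
  have "z \<in> M"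
  proof (rule ccontr)
    assume "z \<notin> M"
    then have "carrier R = PIdl z"
      using notin_M_Units zc ideal_eq_carrier_iff by blast
    then have "I = {\<zero>}"
      using ann_z ann_carrier by simp
    then show False
      using exp_iff[of t] top ideal_zero_closed[OF ideal_pow_ideal[OF ideal_M]] by blast
  qed
  moreover have "z \<notin> ideal_pow R M 2"
  proof
    assume z2: "z \<in> ideal_pow R M 2"
    have "t \<noteq> 0"
      using exp_iff[of 0] I(2) ideal_subset_carrier[OF I(1)] by auto
    have "ideal_pow R M (t - 1) \<subseteq> I"
    proof
      fix a assume a: "a \<in> ideal_pow R M (t - 1)"
      have "a \<otimes> z \<in> ideal_pow R M (t - 1 + 2)"
        using ideal_pow_mult_mem[OF ideal_M a z2] .
      then have "a \<otimes> z = \<zero>"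
        using nil \<open>t \<noteq> 0\<close> by (simp add: Suc_diff_le)
      then show "a \<in> I"
        using ann_z ann_cgenideal[OF zc] ideal.Icarr[OF ideal_pow_ideal[OF ideal_M] a] by blast
    qed
    then show False
      using exp_iff[of "t - 1"] \<open>t \<noteq> 0\<close> by simp
  qed
  ultimately show ?thesis
    using z by blast
qed

end

section \<open>Graded rings\<close>

lemma (in abelian_monoid) finsum_lessThan_zero_tail:
  fixes N K :: nat
  assumes "f \<in> {..<K} \<rightarrow> carrier G" "N \<le> K" "\<And>n. N \<le> n \<Longrightarrow> f n = \<zero>"
  shows "finsum G f {..<K} = finsum G f {..<N}"
proof (rule add.finprod_mono_neutral_cong_left[symmetric])
  show "f i = \<zero>" if "i \<in> {..<K} - {..<N}" for i
    using that assms(3) by simp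
qed (use assms(1,2) in auto)

lemma (in abelian_monoid) finsum_lessThan_shift:
  fixes N p :: nat
  assumes f: "f \<in> {..<N + p} \<rightarrow> carrier G" and low: "\<And>i. i < p \<Longrightarrow> f i = \<zero>"
  shows "finsum G f {..<N + p} = finsum G (\<lambda>r. f (r + p)) {..<N}"
proof -
  have "(\<lambda>r. r + p) ` {..<N} \<subseteq> {..<N + p}"
    by auto
  then have "f \<in> (\<lambda>r. r + p) ` {..<N} \<rightarrow> carrier G"
    using Pi_anti_mono f by blast
  moreover have "inj_on (\<lambda>r. r + p) {..<N}"
    by (simp add: inj_on_def)
  ultimately have "finsum G (\<lambda>r. f (r + p)) {..<N} = finsum G f ((\<lambda>r. r + p) ` {..<N})"
    by (rule finsum_reindex[symmetric])
  also have "\<dots> = finsum G f {..<N + p}"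
  proof (rule add.finprod_mono_neutral_cong_left[OF _ _ _ _ f])
    show "f i = \<zero>" if i: "i \<in> {..<N + p} - (\<lambda>r. r + p) ` {..<N}" for i
    proof (rule low, rule ccontr)
      assume "\<not> i < p"
      then have "i \<in> (\<lambda>r. r + p) ` {..<N}"
        using i by (intro image_eqI[of i _ "i - p"]) auto
      then show False
        using i by blast
    qed
  qed auto
  finally show ?thesis
    by simp
qed

locale graded_cring = cring R for R (structure) +
  fixes G
  assumes graded: "graded_by R G"
begin

lemma G_subgroup: "additive_subgroup (G n) R"
  using conjunct1[OF graded[unfolded graded_by_def]] by blast

lemma G_subset_carrier: "G n \<subseteq> carrier R"
  using additive_subgroup.a_subset[OF G_subgroup] .

lemma G_zero: "\<zero> \<in> G n"
  using additive_subgroup.zero_closed[OF G_subgroup] .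

lemma G_add: "x \<in> G n \<Longrightarrow> y \<in> G n \<Longrightarrow> x \<oplus> y \<in> G n"
  using additive_subgroup.a_closed[OF G_subgroup] .

lemma G_mult: "x \<in> G m \<Longrightarrow> y \<in> G n \<Longrightarrow> x \<otimes> y \<in> G (m + n)"
  using conjunct1[OF conjunct2[OF graded[unfolded graded_by_def]]] by blast

lemma unique_decomposition:
  "a \<in> carrier R \<Longrightarrow> \<exists>!f. (\<forall>n. f n \<in> G n) \<and> (\<exists>N. (\<forall>n\<ge>N. f n = \<zero>) \<and> a = finsum R f {..<N})"
  using conjunct2[OF conjunct2[OF graded[unfolded graded_by_def]]] by blast

definition component :: "'a \<Rightarrow> nat \<Rightarrow> 'a" where
  "component a = (THE f. (\<forall>n. f n \<in> G n) \<and> (\<exists>N. (\<forall>n\<ge>N. f n = \<zero>) \<and> a = finsum R f {..<N}))"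

lemma component_decomposition:
  assumes "a \<in> carrier R"
  shows "(\<forall>n. component a n \<in> G n) \<and> (\<exists>N. (\<forall>n\<ge>N. component a n = \<zero>) \<and> a = finsum R (component a) {..<N})"
  unfolding component_def using unique_decomposition[OF assms] by (rule theI')

lemma component_in_G: "a \<in> carrier R \<Longrightarrow> component a n \<in> G n"
  using component_decomposition by blast

lemma component_carrier: "a \<in> carrier R \<Longrightarrow> component a n \<in> carrier R"
  using component_in_G G_subset_carrier by blast

lemma component_eqI:
  assumes f: "\<And>n. f n \<in> G n" and N: "\<And>n. N \<le> n \<Longrightarrow> f n = \<zero>" and a: "a = finsum R f {..<N}"
  shows "component a = f"
proof -
  have "a \<in> carrier R"
    using a f G_subset_carrier by (auto intro: finsum_closed)
  then show ?thesis
    unfolding component_def using f N a by (intro the1_equality unique_decomposition) blast+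
qed

lemma component_homogeneous:
  assumes x: "x \<in> G k"
  shows "component x n = (if n = k then x else \<zero>)"
proof -
  have "finsum R (\<lambda>n. if n = k then x else \<zero>) {..<Suc k} = x"
    using finsum_singleton[of k "{..<Suc k}" "\<lambda>_. x"] x G_subset_carrier by (auto simp: eq_commute)
  then have "component x = (\<lambda>n. if n = k then x else \<zero>)"
    using x G_zero by (intro component_eqI[of _ "Suc k"]) auto
  then show ?thesis
    by simp
qed

lemma component_add:
  assumes a: "a \<in> carrier R" and b: "b \<in> carrier R"
  shows "component (a \<oplus> b) n = component a n \<oplus> component b n"
proof -
  obtain Na where Na: "\<forall>n\<ge>Na. component a n = \<zero>" "a = finsum R (component a) {..<Na}"
    using component_decomposition[OF a] by blast
  obtain Nb where Nb: "\<forall>n\<ge>Nb. component b n = \<zero>" "b = finsum R (component b) {..<Nb}"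
    using component_decomposition[OF b] by blast
  define N where "N = max Na Nb"
  have ca: "component a \<in> {..<N} \<rightarrow> carrier R" and cb: "component b \<in> {..<N} \<rightarrow> carrier R"
    using component_carrier a b by auto
  have "finsum R (component a) {..<N} = finsum R (component a) {..<Na}"
    using Na(1) by (intro finsum_lessThan_zero_tail[OF ca]) (auto simp: N_def)
  then have sum_a: "finsum R (component a) {..<N} = a"
    using Na(2) by simp
  have "finsum R (component b) {..<N} = finsum R (component b) {..<Nb}"
    using Nb(1) by (intro finsum_lessThan_zero_tail[OF cb]) (auto simp: N_def)
  then have sum_b: "finsum R (component b) {..<N} = b"
    using Nb(2) by simp
  have "a \<oplus> b = finsum R (\<lambda>n. component a n \<oplus> component b n) {..<N}"
    using finsum_addf[OF ca cb] sum_a sum_b by simp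
  moreover have "component a n \<oplus> component b n \<in> G n" for n
    using G_add component_in_G a b by blast
  moreover have "component a n \<oplus> component b n = \<zero>" if "N \<le> n" for n
    using Na(1) Nb(1) that unfolding N_def by simp
  ultimately have "component (a \<oplus> b) = (\<lambda>n. component a n \<oplus> component b n)"
    by (intro component_eqI) blast+
  then show ?thesis
    by simp
qed

lemma component_zero: "component \<zero> n = \<zero>"
  using component_homogeneous[OF G_zero[of 0], of n] by simp

lemma component_mult_homogeneous:
  assumes x: "x \<in> G p" and b: "b \<in> carrier R"
  shows "component (x \<otimes> b) k = (if p \<le> k then x \<otimes> component b (k - p) else \<zero>)"
proof -
  define f where "f k = (if p \<le> k then x \<otimes> component b (k - p) else \<zero>)" for k
  obtain N where N: "\<forall>n\<ge>N. component b n = \<zero>" "b = finsum R (component b) {..<N}"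
    using component_decomposition b by blast
  have xc: "x \<in> carrier R"
    using x G_subset_carrier by blast
  have f_carrier: "f \<in> {..<N + p} \<rightarrow> carrier R"
    unfolding f_def using xc component_carrier b by auto
  have "x \<otimes> b = x \<otimes> finsum R (component b) {..<N}"
    using N(2) by simp
  also have "\<dots> = finsum R (\<lambda>r. x \<otimes> component b r) {..<N}"
    by (rule finsum_rdistr) (use xc component_carrier b in auto)
  also have "\<dots> = finsum R (\<lambda>r. f (r + p)) {..<N}"
    unfolding f_def by simp
  also have "\<dots> = finsum R f {..<N + p}"
    by (rule finsum_lessThan_shift[OF f_carrier, symmetric]) (simp add: f_def)
  finally have sum: "x \<otimes> b = finsum R f {..<N + p}" .
  have "f n \<in> G n" for n
    using G_mult[OF x component_in_G[OF b, of "n - p"]] G_zero by (auto simp: f_def)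
  moreover have "f n = \<zero>" if "N + p \<le> n" for n
    using N(1) that xc by (simp add: f_def)
  ultimately have "component (x \<otimes> b) = f"
    using sum by (rule component_eqI)
  then show ?thesis
    by (simp add: f_def)
qed

end

locale standard_graded_local_ring = local_ring + graded_cring R G for G +
  fixes S
  assumes S_degree_one: "S \<subseteq> G 1"
    and M_generated: "M = Idl S"
    and field_G0: "field (R\<lparr>carrier := G 0\<rparr>)"
begin

lemma S_carrier: "S \<subseteq> carrier R"
  using S_degree_one G_subset_carrier by blast

lemma S_subset_M: "S \<subseteq> M"
  unfolding M_generated using genideal_self[OF S_carrier] .

lemma one_in_G0: "\<one> \<in> G 0"
proof -
  interpret G0: field "R\<lparr>carrier := G 0\<rparr>"
    by (rule field_G0)
  show ?thesis
    using G0.one_closed by simp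
qed

lemma one_neq_zero: "\<one> \<noteq> \<zero>"
  using ideal_zero_closed[OF ideal_M] ideal.one_imp_carrier[OF ideal_M]
    maximalideal.I_notcarr[OF maximalideal_M] by auto

lemma homogeneous_positive_degree_in_M:
  assumes x: "x \<in> G e" and e: "0 < e"
  shows "x \<in> M"
proof (rule ccontr)
  assume "x \<notin> M"
  then have u: "x \<in> Units R"
    using notin_M_Units G_subset_carrier x by blast
  have "component (x \<otimes> inv x) 0 = \<zero>"
    using component_mult_homogeneous[OF x Units_inv_closed[OF u], of 0] e by simp
  moreover have "component (x \<otimes> inv x) 0 = \<one>"
    using component_homogeneous[OF one_in_G0, of 0] u by simp
  ultimately show False
    using one_neq_zero by simp
qed

lemma ideal_pow_components_vanish: "a \<in> ideal_pow R M q \<Longrightarrow> k < q \<Longrightarrow> component a k = \<zero>"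
proof (induct q arbitrary: a k)
  case (Suc q)
  have "a \<in> ideal_prod R M (ideal_pow R M q)"
    using Suc.prems(1) by simp
  then show ?case
    using Suc.prems(2)
  proof (induct a arbitrary: k rule: ideal_prod.induct)
    case (prod i j)
    have jc: "j \<in> carrier R"
      using ideal.Icarr[OF ideal_pow_ideal[OF ideal_M] prod(2)] .
    have "i \<in> Idl S"
      using prod(1) M_generated by simp
    then show ?case
      using S_carrier
    proof (induct i rule: genideal_induct)
      case zero
      then show ?case
        using jc component_zero by simp
    next
      case (step r s b)
      have rj: "r \<otimes> j \<in> ideal_pow R M q"
        using ideal.I_l_closed[OF ideal_pow_ideal[OF ideal_M] prod(2) step(1)] .
      have s: "s \<in> G 1" "s \<in> carrier R"
        using step(2) S_degree_one S_carrier by auto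
      have "r \<otimes> s \<otimes> j = s \<otimes> (r \<otimes> j)"
        using step(1) s jc by (simp add: m_ac)
      then have "(r \<otimes> s \<oplus> b) \<otimes> j = s \<otimes> (r \<otimes> j) \<oplus> b \<otimes> j"
        using step(1,3) s jc by (simp add: l_distr)
      moreover have "component (s \<otimes> (r \<otimes> j)) k = \<zero>"
        using component_mult_homogeneous[OF s(1), of "r \<otimes> j" k] Suc.hyps[OF rj, of "k - 1"]
          prod.prems s(2) step(1) jc by auto
      ultimately show ?case
        using component_add step(1,3,4) s(2) jc by simp
    qed
  next
    case (sum a b)
    have "a \<in> carrier R" "b \<in> carrier R"
      using sum(1,3) ideal_prod_in_carrier[OF ideal_M ideal_pow_ideal[OF ideal_M]] by auto
    then show ?case
      using component_add sum by simp
  qed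
qed simp

lemma homogeneous_in_pow_eq_zero: "x \<in> G e \<Longrightarrow> x \<in> ideal_pow R M (Suc e) \<Longrightarrow> x = \<zero>"
  using ideal_pow_components_vanish[of x "Suc e" e] component_homogeneous[of x e e] by simp

lemma homogeneous_degree_ge_two_in_M2:
  assumes y: "y \<in> G n" "y \<in> M" and n: "2 \<le> n"
  shows "y \<in> ideal_pow R M 2"
proof -
  have "component a n \<in> ideal_pow R M 2" if "a \<in> M" for a
    using that[unfolded M_generated] S_carrier
  proof (induct a rule: genideal_induct)
    case zero
    then show ?case
      using component_zero ideal_zero_closed[OF ideal_pow_ideal[OF ideal_M]] by simp
  next
    case (step r s b)
    have s: "s \<in> G 1" "s \<in> M" "s \<in> carrier R"
      using step(2) S_degree_one S_subset_M S_carrier by auto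
    have decomp: "component (r \<otimes> s \<oplus> b) n = s \<otimes> component r (n - 1) \<oplus> component b n"
      using component_add component_mult_homogeneous[OF s(1) step(1)] step(1,3) s(3) n
      by (simp add: m_comm[of r s])
    moreover have "component r (n - 1) \<in> ideal_pow R M 1"
      using homogeneous_positive_degree_in_M[OF component_in_G[OF step(1)]] n ideal_pow_one[OF ideal_M]
      by simp
    moreover have "s \<in> ideal_pow R M 1"
      using s(2) ideal_pow_one[OF ideal_M] by simp
    ultimately have "s \<otimes> component r (n - 1) \<in> ideal_pow R M (1 + 1)"
      using ideal_pow_mult_mem[OF ideal_M] by blast
    then have "s \<otimes> component r (n - 1) \<in> ideal_pow R M 2"
      by (simp only: one_add_one)
    then show ?case
      using decomp ideal_add_closed[OF ideal_pow_ideal[OF ideal_M]] step(4) by simp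
  qed
  then have "component y n \<in> ideal_pow R M 2"
    using y(2) by blast
  then show ?thesis
    using component_homogeneous[OF y(1), of n] by simp
qed

lemma minimal_homogeneous_generator_degree_one:
  assumes y: "y \<in> G n" "y \<in> M - ideal_pow R M 2"
  shows "n = 1"
proof (rule ccontr)
  assume "n \<noteq> 1"
  then consider "n = 0" | "2 \<le> n"
    by linarith
  then show False
  proof cases
    case 1
    then have "y = \<zero>"
      using homogeneous_in_pow_eq_zero[of y 0] y ideal_pow_one[OF ideal_M] by simp
    then show False
      using y(2) ideal_zero_closed[OF ideal_pow_ideal[OF ideal_M]] by simp
  next
    case 2
    then show False
      using homogeneous_degree_ge_two_in_M2[of y n] y by simp
  qed
qed

lemma socle_if_generators_annihilate:
  assumes c: "c \<in> carrier R" and killed: "\<forall>s\<in>S. c \<otimes> s = \<zero>"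
  shows "c \<in> ann R M"
proof -
  have "S \<subseteq> ann R {c}"
  proof
    fix s assume s: "s \<in> S"
    then have sc: "s \<in> carrier R"
      using S_carrier by blast
    then have "s \<otimes> c = \<zero>"
      using killed s m_comm[OF c sc] by simp
    then show "s \<in> ann R {c}"
      using sc by (simp add: ann_def)
  qed
  then have M_ann: "M \<subseteq> ann R {c}"
    unfolding M_generated using c by (intro genideal_minimal ann_ideal) auto
  have "c \<otimes> m = \<zero>" if "m \<in> M" for m
  proof -
    have "m \<in> carrier R" "m \<otimes> c = \<zero>"
      using M_ann that by (auto simp: ann_def)
    then show ?thesis
      using m_comm[OF c] by simp
  qed
  then show ?thesis
    using c by (simp add: ann_def)
qed

lemma exists_homogeneous_socle_multiple:
  assumes nil: "ideal_pow R M n = {\<zero>}" and y: "y \<in> carrier R" "y \<noteq> \<zero>"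
  shows "\<exists>j a. a \<in> G j \<and> a \<in> ideal_pow R M j \<and> a \<otimes> y \<noteq> \<zero> \<and> a \<otimes> y \<in> ann R M"
proof (rule ccontr)
  assume none: "\<not> ?thesis"
  have "\<exists>a. a \<in> G j \<and> a \<in> ideal_pow R M j \<and> a \<otimes> y \<noteq> \<zero>" for j
  proof (induct j)
    case 0
    then show ?case
      using one_in_G0 y by (intro exI[of _ \<one>]) simp
  next
    case (Suc j)
    then obtain a where a: "a \<in> G j" "a \<in> ideal_pow R M j" "a \<otimes> y \<noteq> \<zero>"
      by blast
    have ac: "a \<in> carrier R"
      using a(1) G_subset_carrier by blast
    have "a \<otimes> y \<notin> ann R M"
      using none a by blast
    then obtain s where s: "s \<in> S" "a \<otimes> y \<otimes> s \<noteq> \<zero>"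
      using socle_if_generators_annihilate ac y(1) by blast
    have sc: "s \<in> carrier R"
      using s(1) S_carrier by blast
    have "a \<otimes> s \<in> G (Suc j)"
      using G_mult[OF a(1)] s(1) S_degree_one by fastforce
    moreover have "a \<otimes> s \<in> ideal_pow R M (Suc j)"
      using ideal_prod.prod[of s M a] s(1) S_subset_M a(2) m_comm[OF ac sc] by auto
    moreover have "a \<otimes> s \<otimes> y \<noteq> \<zero>"
      using s(2) ac sc y(1) by (simp add: m_assoc m_comm[of s y])
    ultimately show ?case
      by blast
  qed
  then obtain a where "a \<in> ideal_pow R M n" "a \<otimes> y \<noteq> \<zero>"
    by blast
  then show False
    using nil y(1) by simp
qed

lemma degree_one_not_annihilated_by_pow:
  assumes socle: "ann R M = ideal_pow R M t" and nil: "ideal_pow R M (Suc t) = {\<zero>}"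
    and y: "y \<in> G 1" "y \<noteq> \<zero>"
  shows "\<exists>a\<in>ideal_pow R M (t - 1). a \<otimes> y \<noteq> \<zero>"
proof -
  obtain j a where a: "a \<in> G j" "a \<in> ideal_pow R M j" "a \<otimes> y \<noteq> \<zero>"
    and ay: "a \<otimes> y \<in> ideal_pow R M t"
    using exists_homogeneous_socle_multiple[OF nil _ y(2)] y(1) G_subset_carrier socle by blast
  have "t \<le> Suc j"
  proof (rule ccontr)
    assume "\<not> t \<le> Suc j"
    then have "a \<otimes> y \<in> ideal_pow R M (Suc (j + 1))"
      using ideal_pow_antimono[OF ideal_M, of "Suc (j + 1)" t] ay by auto
    then show False
      using homogeneous_in_pow_eq_zero G_mult[OF a(1) y(1)] a(3) by blast
  qed
  then have "t - 1 \<le> j"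
    by simp
  then have "a \<in> ideal_pow R M (t - 1)"
    using ideal_pow_antimono[OF ideal_M] a(2) by blast
  then show ?thesis
    using a(3) by blast
qed

lemma exponent_Quot_ann_homogeneous_generator:
  assumes nil: "ideal_pow R M (Suc t) = {\<zero>}" and socle: "ann R M = ideal_pow R M t"
    and y: "y \<in> G n" "y \<in> M - ideal_pow R M 2"
  shows "exponent (R Quot ann R (PIdl y)) = t"
proof -
  have y1: "y \<in> G 1"
    using minimal_homogeneous_generator_degree_one[OF y] y(1) by simp
  have y0: "y \<noteq> \<zero>"
    using y(2) ideal_zero_closed[OF ideal_pow_ideal[OF ideal_M, of 2]] by auto
  obtain a where a: "a \<in> ideal_pow R M (t - 1)" "a \<otimes> y \<noteq> \<zero>"
    using degree_one_not_annihilated_by_pow[OF socle nil y1 y0] by blast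
  have yM: "y \<in> ideal_pow R M 1"
    using y(2) ideal_pow_one[OF ideal_M] by simp
  have "t \<noteq> 0"
  proof
    assume "t = 0"
    then have "y \<in> ideal_pow R M (Suc t)"
      using yM by simp
    then show False
      using nil y0 by simp
  qed
  then show ?thesis
    using exponent_Quot_ann[OF nil _ yM a] by simp
qed

end

lemma gorenstein_artinian_imp_gorenstein_local_ring:
  assumes gor: "gorenstein_artinian A" and v: "v \<in> carrier A"
    and socle: "ann A (max_ideal A) = PIdl\<^bsub>A\<^esub> v"
  shows "gorenstein_local_ring A (max_ideal A) v"
proof -
  obtain w where w: "w \<in> carrier A" "w \<noteq> \<zero>\<^bsub>A\<^esub>" "ann A (max_ideal A) = PIdl\<^bsub>A\<^esub> w"
    and art: "artinian_local A"
    using gor unfolding gorenstein_artinian_def by blast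
  then have cr: "cring A" and ex1: "\<exists>!M. maximalideal M A"
    and noeth: "noetherian_ring A" and nil: "\<exists>r. ideal_pow A (max_ideal A) r = {\<zero>\<^bsub>A\<^esub>}"
    unfolding artinian_local_def is_local_def by auto
  have max: "maximalideal (max_ideal A) A"
    unfolding max_ideal_def using ex1 by (rule theI')
  have unique: "maximalideal N A \<Longrightarrow> N = max_ideal A" for N
    using ex1 max by blast
  have "v \<noteq> \<zero>\<^bsub>A\<^esub>"
  proof
    interpret A: cring A
      by (rule cr)
    assume "v = \<zero>\<^bsub>A\<^esub>"
    then have "w \<in> PIdl\<^bsub>A\<^esub> \<zero>\<^bsub>A\<^esub>"
      using socle w(3) A.cgenideal_self[OF w(1)] by simp
    then show False
      using w(2) unfolding cgenideal_def by auto
  qed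
  then show ?thesis
    unfolding gorenstein_local_ring_def gorenstein_local_ring_axioms_def artinian_local_ring_def
      artinian_local_ring_axioms_def local_ring_def local_ring_axioms_def
    using cr max unique noeth nil v socle by blast
qed

theorem proposition3p6:
  fixes A :: "('a, 'b) ring_scheme" and t :: nat and v :: 'a
  assumes gor: "gorenstein_artinian A"
    and expo: "exponent A = t + 1"
    and v: "v \<in> carrier A"
    and socle1: "ann A (max_ideal A) = ideal_pow A (max_ideal A) t"
    and socle2: "ann A (max_ideal A) = PIdl\<^bsub>A\<^esub> v"
  shows
   "(\<forall>(I :: nat \<Rightarrow> 'a set) (d :: nat \<Rightarrow> 'a).
       t \<ge> 1 \<and>
       (\<forall>i\<in>{1..t}. gorenstein_ideal A (I i)) \<and>
       {\<zero>\<^bsub>A\<^esub>} \<subset> I 1 \<and>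
       (\<forall>i. 1 \<le> i \<and> i < t \<longrightarrow> I i \<subset> I (Suc i)) \<and>
       I t = max_ideal A \<and>
       (\<forall>i\<in>{1..t}. d i \<in> carrier A) \<and>
       v = finprod A d {1..t} \<and>
       (\<forall>i\<in>{1..t}. I i = ann A (PIdl\<^bsub>A\<^esub> (finprod A d {1..i})))
     \<longrightarrow>
       (\<forall>i\<in>{1..t}. d i \<in> max_ideal A - ideal_pow A (max_ideal A) 2 \<and>
                    exponent (A Quot I i) = exponent A - i) \<and>
       (\<exists>y \<in> max_ideal A - ideal_pow A (max_ideal A) 2.
          I 1 = ann A (PIdl\<^bsub>A\<^esub> y) \<and> exponent (A Quot I 1) = exponent A - 1))
  \<and>
   (\<forall>I. gorenstein_ideal A I \<and> exponent (A Quot I) = exponent A - 1 \<longrightarrow>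
       (\<exists>y \<in> max_ideal A - ideal_pow A (max_ideal A) 2. ann A I = PIdl\<^bsub>A\<^esub> y))
  \<and>
   (\<forall>(G :: nat \<Rightarrow> 'a set) y.
       graded_by A G \<and>
       (\<exists>S \<subseteq> G 1. max_ideal A = Idl\<^bsub>A\<^esub> S) \<and>
       field (A\<lparr>carrier := G 0\<rparr>) \<and>
       (\<exists>n. y \<in> G n) \<and>
       y \<in> max_ideal A - ideal_pow A (max_ideal A) 2
     \<longrightarrow> exponent (A Quot ann A (PIdl\<^bsub>A\<^esub> y)) = exponent A - 1)"
proof -
  interpret gorenstein_local_ring A "max_ideal A" v
    using gorenstein_artinian_imp_gorenstein_local_ring[OF gor v socle2] .
  have "ideal_pow A (max_ideal A) (exponent A) = {\<zero>\<^bsub>A\<^esub>}"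
    unfolding exponent_def using nilpotent_M by (rule LeastI_ex)
  then have nil: "ideal_pow A (max_ideal A) (Suc t) = {\<zero>\<^bsub>A\<^esub>}"
    using expo by simp
  have top: "ideal_pow A (max_ideal A) t \<noteq> {\<zero>\<^bsub>A\<^esub>}"
    using socle1 socle2 cgenideal_self[OF v] v_nonzero by auto
  show ?thesis
  proof ((intro conjI allI impI; elim conjE), goal_cases)
    case (1 I d)
    have "finprod A d {1..t} \<noteq> \<zero>\<^bsub>A\<^esub>"
      using 1(7) v_nonzero by simp
    from annihilator_chain_factors[OF nil 1(3,4,6) this 1(8)] show ?case
      using expo by simp
  next
    case (2 I d)
    have "finprod A d {1..t} \<noteq> \<zero>\<^bsub>A\<^esub>"
      using 2(7) v_nonzero by simp
    from annihilator_chain_factors[OF nil 2(3,4,6) this 2(8)] 2(1)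
    have "d 1 \<in> max_ideal A - ideal_pow A (max_ideal A) 2" "exponent (A Quot I 1) = t"
      by auto
    moreover have "I 1 = ann A (PIdl\<^bsub>A\<^esub> (d 1))"
      using 2(1,6,8) by simp
    ultimately show ?case
      using expo by (intro bexI[of _ "d 1"]) simp_all
  next
    case (3 I)
    then show ?case
      using ann_gorenstein_ideal_minimal_generator[OF nil top] expo by simp
  next
    case (4 G y)
    then obtain S n where S: "S \<subseteq> G 1" "max_ideal A = Idl\<^bsub>A\<^esub> S" and n: "y \<in> G n"
      by blast
    interpret standard_graded_local_ring A "max_ideal A" G S
      using local_ring_axioms 4(1,3) S
      by (simp add: standard_graded_local_ring_def standard_graded_local_ring_axioms_def
          graded_cring_def graded_cring_axioms_def is_cring)
    show ?case
      using exponent_Quot_ann_homogeneous_generator[OF nil socle1 n 4(5)] expo by simp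
  qed
qed

end
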